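(* Let $(G,u,v,\alpha,\beta)$ be a Guvab, with associated Wasserstein distances $W_k$ ($k\ge 0$). Then: (i) either the sequence $\{W_{2k}\}_{k\ge0}$ is eventually constant, or there exist a constant $\lambda_{\mathrm{even}}\in(-1,1)$ and a constant $c_{\mathrm{even}}>0$ such that $\left|W_{2k}-\lim_{k\to\infty}W_{2k}\right| \sim c_{\mathrm{even}}\cdot|\lambda_{\mathrm{even}}|^{2k}$ as $k\to\infty$; (ii) either the sequence $\{W_{2k+1}\}_{k\ge0}$ is eventually constant, or there exist a constant $\lambda_{\mathrm{odd}}\in(-1,1)$ and a constant $c_{\mathrm{odd}}>0$ such that $\left|W_{2k+1}-\lim_{k\to\infty}W_{2k+1}\right| \sim c_{\mathrm{odd}}\cdot|\lambda_{\mathrm{odd}}|^{2k+1}$ as $k\to\infty$. (The limits $\lim_k W_{2k}$ and $\lim_k W_{2k+1}$ always exist.)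
   Context: A Guvab is a tuple $(G,u,v,\alpha,\beta)$ where $G$ is a finite, connected, simple graph, $u,v\in V(G)$, and $\alpha,\beta\in[0,1]$ with $\alpha\le\beta$. A random walk on $G$ with starting vertex $w$ and laziness $\gamma$ is the Markov chain $R_0=w$ and, for $i\ge1$, $R_i=R_{i-1}$ with probability $\gamma$ and $R_i=t$ with probability $\frac{1-\gamma}{\deg(R_{i-1})}$ for each neighbor $t$ of $R_{i-1}$. Let $\mu_k$ be the distribution of the $k$-th step of the walk from $u$ with laziness $\alpha$ and $\nu_k$ that of the walk from $v$ with laziness $\beta$. The Wasserstein distance $W(\mu,\nu)$ between two probability distributions on $V(G)$ is the minimum, over couplings (transportation plans) $T\ge0$ on $V(G)\times V(G)$ with marginals $\mu$ and $\nu$, of $\sum_{w_1,w_2} d(w_1,w_2)T(w_1,w_2)$, where $d$ is the graph distance; equivalently $W(\mu,\nu)=\max_{\ell}\sum_{w}\ell(w)(\mu(w)-\nu(w))$ over 1-Lipschitz functions $\ell:V(G)\to\mathbb{R}$. Set $W_k=W(\mu_k,\nu_k)$. A real sequence $\{S_i\}_{i\ge0}$ is eventually constant if there is $N$ with $S_k=S_N$ for all $k\ge N$. For sequences $a_k,b_k$, $a_k\sim b_k$ means $a_k/b_k\to1$. *)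

theory Defs
  imports "HOL-Analysis.Analysis" "HOL-Library.Landau_Symbols"
begin

definition edges :: "('a \<Rightarrow> 'a \<Rightarrow> bool) \<Rightarrow> ('a \<times> 'a) set" where
  "edges E = {(x, y). E x y}"

definition simple_connected_graph :: "'a set \<Rightarrow> ('a \<Rightarrow> 'a \<Rightarrow> bool) \<Rightarrow> bool" where
  "simple_connected_graph V E \<longleftrightarrow>
     finite V \<and> V \<noteq> {} \<and>
     (\<forall>x y. E x y \<longrightarrow> x \<in> V \<and> y \<in> V) \<and>
     (\<forall>x y. E x y \<longrightarrow> E y x) \<and>
     (\<forall>x. \<not> E x x) \<and>
     (\<forall>x\<in>V. \<forall>y\<in>V. (x, y) \<in> (edges E)\<^sup>*)"

definition guvab :: "'a set \<Rightarrow> ('a \<Rightarrow> 'a \<Rightarrow> bool) \<Rightarrow> 'a \<Rightarrow> 'a \<Rightarrow> real \<Rightarrow> real \<Rightarrow> bool" where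
  "guvab V E u v \<alpha> \<beta> \<longleftrightarrow> simple_connected_graph V E \<and> u \<in> V \<and> v \<in> V \<and>
     0 \<le> \<alpha> \<and> \<alpha> \<le> \<beta> \<and> \<beta> \<le> 1"

definition deg :: "('a \<Rightarrow> 'a \<Rightarrow> bool) \<Rightarrow> 'a \<Rightarrow> nat" where
  "deg E x = card {y. E x y}"

definition gdist :: "('a \<Rightarrow> 'a \<Rightarrow> bool) \<Rightarrow> 'a \<Rightarrow> 'a \<Rightarrow> nat" where
  "gdist E x y = (LEAST n. (x, y) \<in> edges E ^^ n)"

definition trans_prob :: "('a \<Rightarrow> 'a \<Rightarrow> bool) \<Rightarrow> real \<Rightarrow> 'a \<Rightarrow> 'a \<Rightarrow> real" where
  "trans_prob E \<gamma> x y = (if x = y then \<gamma> else 0) + (if E x y then (1 - \<gamma>) / real (deg E x) else 0)"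

fun walk_dist :: "'a set \<Rightarrow> ('a \<Rightarrow> 'a \<Rightarrow> bool) \<Rightarrow> real \<Rightarrow> 'a \<Rightarrow> nat \<Rightarrow> 'a \<Rightarrow> real" where
  "walk_dist V E \<gamma> w 0 = (\<lambda>y. if y = w then 1 else 0)"
| "walk_dist V E \<gamma> w (Suc k) = (\<lambda>y. \<Sum>x\<in>V. walk_dist V E \<gamma> w k x * trans_prob E \<gamma> x y)"

definition coupling :: "'a set \<Rightarrow> ('a \<Rightarrow> real) \<Rightarrow> ('a \<Rightarrow> real) \<Rightarrow> ('a \<Rightarrow> 'a \<Rightarrow> real) \<Rightarrow> bool" where
  "coupling V \<mu> \<nu> T \<longleftrightarrow>
     (\<forall>x\<in>V. \<forall>y\<in>V. 0 \<le> T x y) \<and>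
     (\<forall>x\<in>V. (\<Sum>y\<in>V. T x y) = \<mu> x) \<and>
     (\<forall>y\<in>V. (\<Sum>x\<in>V. T x y) = \<nu> y)"

definition wasserstein :: "'a set \<Rightarrow> ('a \<Rightarrow> 'a \<Rightarrow> bool) \<Rightarrow> ('a \<Rightarrow> real) \<Rightarrow> ('a \<Rightarrow> real) \<Rightarrow> real" where
  "wasserstein V E \<mu> \<nu> =
     Inf {(\<Sum>x\<in>V. \<Sum>y\<in>V. real (gdist E x y) * T x y) | T. coupling V \<mu> \<nu> T}"

definition W_seq :: "'a set \<Rightarrow> ('a \<Rightarrow> 'a \<Rightarrow> bool) \<Rightarrow> 'a \<Rightarrow> 'a \<Rightarrow> real \<Rightarrow> real \<Rightarrow> nat \<Rightarrow> real" where
  "W_seq V E u v \<alpha> \<beta> k = wasserstein V E (walk_dist V E \<alpha> u k) (walk_dist V E \<beta> v k)"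

definition eventually_constant :: "(nat \<Rightarrow> real) \<Rightarrow> bool" where
  "eventually_constant S \<longleftrightarrow> (\<exists>N. \<forall>k\<ge>N. S k = S N)"

end

(*
  The walk distributions are the powers of a transition kernel that is reversible with respect
  to the degrees, hence self-adjoint for a weighted inner product. So every annihilating
  polynomial can be reduced to one with simple real roots, and each coordinate of \<mu>\<^sub>k and
  \<nu>\<^sub>k is a finite sum of terms c r\<^sup>k with real r. Along even or along odd k these become
  eventual exponential sums: finite sums of terms c q\<^sup>k with q = r\<^sup>2 > 0.

  W\<^sub>k is the value of a transportation problem with these marginals. Its optimum is attained
  at a basic solution, whose support is one of finitely many independent sets, and on a fixed
  independent support the plan depends linearly on the marginals. Since an exponential sum has
  eventually constant sign, feasibility of each basic solution is eventually decided, so along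
  each parity W\<^sub>k is eventually the minimum of finitely many exponential sums, hence one itself.
  A bounded exponential sum is either eventually constant or differs from its limit by
  ~ c q\<^sup>k, where q is its largest base below 1.
*)

theory Submission
  imports Defs "HOL-Library.Function_Algebras" "HOL-Computational_Algebra.Fundamental_Theorem_Algebra"
begin

section \<open>Eventual exponential sums\<close>

definition eventually_expsum :: "(nat \<Rightarrow> real) \<Rightarrow> bool" where
  "eventually_expsum s \<longleftrightarrow>
     (\<exists>Q a. finite Q \<and> Q \<subseteq> {0<..} \<and> (\<forall>\<^sub>F k in sequentially. s k = (\<Sum>q\<in>Q. a q * q ^ k)))"

lemma eventually_expsumI:
  assumes "finite Q" "Q \<subseteq> {0<..}" "\<forall>\<^sub>F k in sequentially. s k = (\<Sum>q\<in>Q. a q * q ^ k)"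
  shows "eventually_expsum s"
  using assms unfolding eventually_expsum_def by blast

lemma eventually_expsum_nonzero_coeffs:
  assumes "eventually_expsum s"
  obtains Q a where "finite Q" "Q \<subseteq> {0<..}" "\<forall>q\<in>Q. a q \<noteq> 0"
    "\<forall>\<^sub>F k in sequentially. s k = (\<Sum>q\<in>Q. a q * q ^ k)"
proof -
  obtain Q a where Q: "finite Q" "Q \<subseteq> {0<..}"
    and ev: "\<forall>\<^sub>F k in sequentially. s k = (\<Sum>q\<in>Q. a q * q ^ k)"
    using assms unfolding eventually_expsum_def by blast
  define Q' where "Q' = {q\<in>Q. a q \<noteq> 0}"
  have "(\<Sum>q\<in>Q. a q * q ^ k) = (\<Sum>q\<in>Q'. a q * q ^ k)" for k
    using Q(1) by (intro sum.mono_neutral_right) (auto simp: Q'_def)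
  with ev have "\<forall>\<^sub>F k in sequentially. s k = (\<Sum>q\<in>Q'. a q * q ^ k)"
    by simp
  moreover have "finite Q'" "Q' \<subseteq> {0<..}" "\<forall>q\<in>Q'. a q \<noteq> 0"
    using Q by (auto simp: Q'_def)
  ultimately show ?thesis using that by blast
qed

lemma eventually_expsum_cong:
  assumes "eventually_expsum s" "\<forall>\<^sub>F k in sequentially. s k = t k"
  shows "eventually_expsum t"
proof -
  obtain Q a where "finite Q" "Q \<subseteq> {0<..}"
    and "\<forall>\<^sub>F k in sequentially. s k = (\<Sum>q\<in>Q. a q * q ^ k)"
    using assms(1) unfolding eventually_expsum_def by blast
  with assms(2) show ?thesis
    by (intro eventually_expsumI[of Q _ a]) (auto elim: eventually_elim2)
qed

lemma eventually_expsum_geometric: "q > 0 \<Longrightarrow> eventually_expsum (\<lambda>k. c * q ^ k)"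
  by (rule eventually_expsumI[of "{q}" _ "\<lambda>_. c"]) simp_all

lemma eventually_expsum_const: "eventually_expsum (\<lambda>k. c)"
  using eventually_expsum_geometric[of 1 c] by simp

lemma eventually_expsum_add:
  assumes "eventually_expsum s" "eventually_expsum t"
  shows "eventually_expsum (\<lambda>k. s k + t k)"
proof -
  obtain Q1 a1 where Q1: "finite Q1" "Q1 \<subseteq> {0<..}"
    and ev1: "\<forall>\<^sub>F k in sequentially. s k = (\<Sum>q\<in>Q1. a1 q * q ^ k)"
    using assms(1) unfolding eventually_expsum_def by blast
  obtain Q2 a2 where Q2: "finite Q2" "Q2 \<subseteq> {0<..}"
    and ev2: "\<forall>\<^sub>F k in sequentially. t k = (\<Sum>q\<in>Q2. a2 q * q ^ k)"
    using assms(2) unfolding eventually_expsum_def by blast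
  define a where "a q = (if q \<in> Q1 then a1 q else 0) + (if q \<in> Q2 then a2 q else 0)" for q
  have "(\<Sum>q\<in>Q1. a1 q * q ^ k) = (\<Sum>q\<in>Q1 \<union> Q2. (if q \<in> Q1 then a1 q else 0) * q ^ k)"
    and "(\<Sum>q\<in>Q2. a2 q * q ^ k) = (\<Sum>q\<in>Q1 \<union> Q2. (if q \<in> Q2 then a2 q else 0) * q ^ k)" for k
    using Q1(1) Q2(1) by (auto intro: sum.mono_neutral_cong_left)
  then have sum_eq: "(\<Sum>q\<in>Q1 \<union> Q2. a q * q ^ k) = (\<Sum>q\<in>Q1. a1 q * q ^ k) + (\<Sum>q\<in>Q2. a2 q * q ^ k)" for k
    by (simp add: a_def distrib_right sum.distrib)
  from ev1 ev2 have "\<forall>\<^sub>F k in sequentially. s k + t k = (\<Sum>q\<in>Q1 \<union> Q2. a q * q ^ k)"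
    by eventually_elim (simp add: sum_eq)
  with Q1 Q2 show ?thesis by (intro eventually_expsumI) auto
qed

lemma eventually_expsum_cmult:
  assumes "eventually_expsum s"
  shows "eventually_expsum (\<lambda>k. c * s k)"
proof -
  obtain Q a where Q: "finite Q" "Q \<subseteq> {0<..}"
    and ev: "\<forall>\<^sub>F k in sequentially. s k = (\<Sum>q\<in>Q. a q * q ^ k)"
    using assms unfolding eventually_expsum_def by blast
  from ev have "\<forall>\<^sub>F k in sequentially. c * s k = (\<Sum>q\<in>Q. (c * a q) * q ^ k)"
    by eventually_elim (simp add: sum_distrib_left mult.assoc)
  with Q show ?thesis by (rule eventually_expsumI)
qed

lemma eventually_expsum_diff:
  assumes "eventually_expsum s" "eventually_expsum t"
  shows "eventually_expsum (\<lambda>k. s k - t k)"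
  using eventually_expsum_add[OF assms(1) eventually_expsum_cmult[OF assms(2), of "-1"]] by simp

lemma eventually_expsum_sum:
  assumes "\<And>i. i \<in> I \<Longrightarrow> eventually_expsum (f i)"
  shows "eventually_expsum (\<lambda>k. \<Sum>i\<in>I. f i k)"
  using assms
proof (induction I rule: infinite_finite_induct)
  case (insert i I)
  then show ?case by (simp add: eventually_expsum_add)
qed (simp_all add: eventually_expsum_const)

lemma eventually_expsum_power_parity:
  fixes D :: "real set"
  shows "eventually_expsum (\<lambda>k. \<Sum>r\<in>D. C r * r ^ (2 * k + j))"
proof (intro eventually_expsum_sum)
  fix r
  have power_eq: "C r * r ^ (2 * k + j) = C r * r ^ j * (r\<^sup>2) ^ k" for k
  proof -
    have "r ^ (2 * k + j) = (r\<^sup>2) ^ k * r ^ j"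
      by (simp only: power_add power_mult)
    then show ?thesis by simp
  qed
  show "eventually_expsum (\<lambda>k. C r * r ^ (2 * k + j))"
  proof (cases "r = 0")
    case True
    have "\<forall>\<^sub>F k in sequentially. 0 = C r * r ^ (2 * k + j)"
      using True eventually_gt_at_top[of 0] by (auto simp: power_eq elim: eventually_mono)
    then show ?thesis
      by (rule eventually_expsum_cong[OF eventually_expsum_const])
  next
    case False
    then show ?thesis
      unfolding power_eq by (intro eventually_expsum_geometric) simp
  qed
qed

lemma expsum_ratio_tendsto_leading:
  fixes Q :: "real set"
  assumes "finite Q" "Q \<subseteq> {0<..}" "Q \<noteq> {}"
  shows "(\<lambda>k. (\<Sum>q\<in>Q. a q * q ^ k) / Max Q ^ k) \<longlonglongrightarrow> a (Max Q)"
proof -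
  define m where "m = Max Q"
  have m: "m \<in> Q" "m > 0"
    using assms Max_in unfolding m_def by auto
  have "(\<lambda>k. \<Sum>q\<in>Q. a q * (q / m) ^ k) \<longlonglongrightarrow> (\<Sum>q\<in>Q. if q = m then a q else 0)"
  proof (intro tendsto_sum)
    fix q assume q: "q \<in> Q"
    show "(\<lambda>k. a q * (q / m) ^ k) \<longlonglongrightarrow> (if q = m then a q else 0)"
    proof (cases "q = m")
      case False
      have "0 < q" "q < m"
        using q assms(2) Max_ge[OF assms(1) q] False unfolding m_def by auto
      then have "\<bar>q / m\<bar> < 1" by simp
      then show ?thesis
        using False by (simp add: LIMSEQ_abs_realpow_zero2 tendsto_mult_right_zero)
    qed (use m in simp)
  qed
  moreover have "(\<Sum>q\<in>Q. a q * q ^ k) / m ^ k = (\<Sum>q\<in>Q. a q * (q / m) ^ k)" for k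
    by (simp add: sum_divide_distrib power_divide)
  ultimately show ?thesis
    using m assms(1) unfolding m_def by (simp add: sum.delta)
qed

lemma expsum_asymp_equiv_leading:
  fixes Q :: "real set"
  assumes "finite Q" "Q \<subseteq> {0<..}" "Q \<noteq> {}" "a (Max Q) \<noteq> 0"
  shows "(\<lambda>k. \<Sum>q\<in>Q. a q * q ^ k) \<sim>[sequentially] (\<lambda>k. a (Max Q) * Max Q ^ k)"
proof (rule asymp_equivI')
  have "(\<lambda>k. (\<Sum>q\<in>Q. a q * q ^ k) / Max Q ^ k / a (Max Q)) \<longlonglongrightarrow> a (Max Q) / a (Max Q)"
    by (intro tendsto_divide[OF expsum_ratio_tendsto_leading[OF assms(1-3)] tendsto_const] assms(4))
  then show "(\<lambda>k. (\<Sum>q\<in>Q. a q * q ^ k) / (a (Max Q) * Max Q ^ k)) \<longlonglongrightarrow> 1"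
    using assms(4) by (simp add: divide_divide_eq_left mult.commute)
qed

lemma eventually_expsum_sign_cases:
  assumes "eventually_expsum s"
  shows "(\<forall>\<^sub>F k in sequentially. s k = 0) \<or> (\<forall>\<^sub>F k in sequentially. s k > 0)
     \<or> (\<forall>\<^sub>F k in sequentially. s k < 0)"
proof -
  obtain Q a where Q: "finite Q" "Q \<subseteq> {0<..}" "\<forall>q\<in>Q. a q \<noteq> 0"
    and ev: "\<forall>\<^sub>F k in sequentially. s k = (\<Sum>q\<in>Q. a q * q ^ k)"
    using assms by (rule eventually_expsum_nonzero_coeffs)
  show ?thesis
  proof (cases "Q = {}")
    case False
    define m where "m = Max Q"
    have m: "m \<in> Q" "m > 0"
      using Q False Max_in unfolding m_def by auto
    have am: "a m \<noteq> 0" using Q(3) m by blast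
    have "(\<lambda>k. \<Sum>q\<in>Q. a q * q ^ k) \<sim>[sequentially] (\<lambda>k. a m * m ^ k)"
      using expsum_asymp_equiv_leading[OF Q(1,2) False] am unfolding m_def by simp
    then have "s \<sim>[sequentially] (\<lambda>k. a m * m ^ k)"
      by (rule asymp_equiv_transfer) (use ev in \<open>auto elim: eventually_mono\<close>)
    then have "\<forall>\<^sub>F k in sequentially. sgn (s k) = sgn (a m * m ^ k)"
      by (rule asymp_equiv_eventually_same_sign)
    moreover have "sgn (a m * m ^ k) = sgn (a m)" for k
      using m(2) by (simp add: sgn_mult)
    ultimately have sgn_eq: "\<forall>\<^sub>F k in sequentially. sgn (s k) = sgn (a m)"
      by simp
    show ?thesis
    proof (cases "a m > 0")
      case True
      with sgn_eq have "\<forall>\<^sub>F k in sequentially. s k > 0"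
        by (auto elim: eventually_mono simp: sgn_if split: if_splits)
      then show ?thesis by blast
    next
      case False
      with am sgn_eq have "\<forall>\<^sub>F k in sequentially. s k < 0"
        by (auto elim: eventually_mono simp: sgn_if split: if_splits)
      then show ?thesis by blast
    qed
  qed (use ev in simp)
qed

lemma eventually_expsum_min:
  assumes "eventually_expsum s" "eventually_expsum t"
  shows "eventually_expsum (\<lambda>k. min (s k) (t k))"
  using eventually_expsum_sign_cases[OF eventually_expsum_diff[OF assms]]
proof (elim disjE)
  assume "\<forall>\<^sub>F k in sequentially. s k - t k = 0"
  then show ?thesis
    by (rule eventually_expsum_cong[OF assms(1) eventually_mono]) simp
next
  assume "\<forall>\<^sub>F k in sequentially. s k - t k > 0"
  then show ?thesis
    by (rule eventually_expsum_cong[OF assms(2) eventually_mono]) simp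
next
  assume "\<forall>\<^sub>F k in sequentially. s k - t k < 0"
  then show ?thesis
    by (rule eventually_expsum_cong[OF assms(1) eventually_mono]) simp
qed

lemma eventually_expsum_Min:
  assumes "finite F" "F \<noteq> {}" "\<And>i. i \<in> F \<Longrightarrow> eventually_expsum (f i)"
  shows "eventually_expsum (\<lambda>k. Min ((\<lambda>i. f i k) ` F))"
  using assms
proof (induction F rule: finite_ne_induct)
  case (insert i F)
  then show ?case by (simp add: eventually_expsum_min)
qed simp

lemma bounded_expsum_bases_le_1:
  fixes Q :: "real set"
  assumes "finite Q" "Q \<subseteq> {0<..}" "\<forall>q\<in>Q. a q \<noteq> 0"
    and "\<forall>\<^sub>F k in sequentially. s k = (\<Sum>q\<in>Q. a q * q ^ k)" "\<And>k. \<bar>s k\<bar> \<le> B"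
    and "q \<in> Q"
  shows "q \<le> 1"
proof (rule ccontr)
  assume "\<not> q \<le> 1"
  define m where "m = Max Q"
  have "Q \<noteq> {}" using assms(6) by blast
  then have m: "m \<in> Q" "m > 1"
    using \<open>\<not> q \<le> 1\<close> Max_in[OF assms(1)] Max_ge[OF assms(1,6)] unfolding m_def by auto
  have "(\<lambda>k. (\<Sum>q\<in>Q. a q * q ^ k) / m ^ k) \<longlonglongrightarrow> a m"
    using expsum_ratio_tendsto_leading[OF assms(1,2) \<open>Q \<noteq> {}\<close>] unfolding m_def .
  then have "(\<lambda>k. s k / m ^ k) \<longlonglongrightarrow> a m"
    by (rule Lim_transform_eventually) (use assms(4) in \<open>auto elim: eventually_mono\<close>)
  moreover have "(\<lambda>k. s k / m ^ k) \<longlonglongrightarrow> 0"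
  proof (rule Lim_null_comparison)
    show "\<forall>\<^sub>F k in sequentially. norm (s k / m ^ k) \<le> B * (1 / m) ^ k"
      using m assms(5) by (intro always_eventually allI)
        (simp add: abs_div divide_right_mono power_one_over)
    show "(\<lambda>k. B * (1 / m) ^ k) \<longlonglongrightarrow> 0"
      using m by (intro tendsto_mult_right_zero LIMSEQ_abs_realpow_zero2) simp
  qed
  ultimately have "a m = 0" by (rule LIMSEQ_unique)
  with assms(3) m show False by blast
qed

lemma eventually_constant_iff_eventually_eq:
  "eventually_constant s \<longleftrightarrow> (\<exists>L. \<forall>\<^sub>F k in sequentially. s k = L)"
  unfolding eventually_constant_def eventually_sequentially by (metis order_refl)

lemma eventually_constant_convergent: "eventually_constant s \<Longrightarrow> convergent s"
  unfolding eventually_constant_iff_eventually_eq convergent_def by (blast intro: tendsto_eventually)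

lemma bounded_expsum_asymp:
  assumes "eventually_expsum s" "\<And>k. \<bar>s k\<bar> \<le> B"
  shows "convergent s \<and> (eventually_constant s \<or>
    (\<exists>q c. 0 < q \<and> q < 1 \<and> 0 < c \<and> (\<lambda>k. \<bar>s k - lim s\<bar>) \<sim>[sequentially] (\<lambda>k. c * q ^ k)))"
proof -
  obtain Q a where Q: "finite Q" "Q \<subseteq> {0<..}" "\<forall>q\<in>Q. a q \<noteq> 0"
    and ev: "\<forall>\<^sub>F k in sequentially. s k = (\<Sum>q\<in>Q. a q * q ^ k)"
    using assms(1) by (rule eventually_expsum_nonzero_coeffs)
  have le1: "q \<le> 1" if "q \<in> Q" for q
    using bounded_expsum_bases_le_1[OF Q ev assms(2) that] .
  define L where "L = (if 1 \<in> Q then a 1 else 0)"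
  define Q' where "Q' = Q - {1}"
  have Q': "finite Q'" "Q' \<subseteq> {0<..}" "\<forall>q\<in>Q'. 0 < q \<and> q < 1 \<and> a q \<noteq> 0"
    using Q le1 unfolding Q'_def by force+
  have "(\<Sum>q\<in>Q. a q * q ^ k) = L + (\<Sum>q\<in>Q'. a q * q ^ k)" for k
    using Q(1) by (cases "1 \<in> Q") (simp_all add: L_def Q'_def sum.remove)
  with ev have ev': "\<forall>\<^sub>F k in sequentially. s k - L = (\<Sum>q\<in>Q'. a q * q ^ k)"
    by (auto elim: eventually_mono)
  show ?thesis
  proof (cases "Q' = {}")
    case True
    with ev' have "\<forall>\<^sub>F k in sequentially. s k = L" by simp
    then have "eventually_constant s"
      unfolding eventually_constant_iff_eventually_eq by blast
    then show ?thesis by (simp add: eventually_constant_convergent)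
  next
    case False
    define m where "m = Max Q'"
    have m: "0 < m" "m < 1" "a m \<noteq> 0"
      using Q'(3) Max_in[OF Q'(1) False] unfolding m_def by blast+
    have "(\<lambda>k. \<Sum>q\<in>Q'. a q * q ^ k) \<sim>[sequentially] (\<lambda>k. a m * m ^ k)"
      using expsum_asymp_equiv_leading[OF Q'(1,2) False] m(3) unfolding m_def by simp
    then have equiv: "(\<lambda>k. s k - L) \<sim>[sequentially] (\<lambda>k. a m * m ^ k)"
      by (rule asymp_equiv_transfer) (use ev' in \<open>auto elim: eventually_mono\<close>)
    have "(\<lambda>k. a m * m ^ k) \<longlonglongrightarrow> 0"
      using m by (intro tendsto_mult_right_zero LIMSEQ_realpow_zero) simp_all
    then have "(\<lambda>k. s k - L) \<longlonglongrightarrow> 0"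
      using asymp_equiv_tendsto_transfer[OF asymp_equiv_symI[OF equiv]] by blast
    then have "s \<longlonglongrightarrow> L"
      by (simp add: LIM_zero_iff)
    then have "convergent s" "lim s = L"
      by (auto simp: convergent_def limI)
    moreover have "(\<lambda>k. \<bar>s k - L\<bar>) \<sim>[sequentially] (\<lambda>k. \<bar>a m\<bar> * m ^ k)"
      using asymp_equiv_abs_real[OF equiv] m(1) by (simp add: abs_mult)
    ultimately show ?thesis
      using m by auto
  qed
qed

lemma bounded_expsum_asymp_power:
  assumes "eventually_expsum s" "\<And>k. \<bar>s k\<bar> \<le> B"
  shows "convergent s \<and> (eventually_constant s \<or>
    (\<exists>lam c::real. -1 < lam \<and> lam < 1 \<and> 0 < c \<and>
       (\<lambda>k. \<bar>s k - lim s\<bar>) \<sim>[sequentially] (\<lambda>k. c * \<bar>lam\<bar> ^ (2 * k + j))))"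
proof -
  have "\<exists>lam c::real. -1 < lam \<and> lam < 1 \<and> 0 < c \<and>
      (\<lambda>k. \<bar>s k - lim s\<bar>) \<sim>[sequentially] (\<lambda>k. c * \<bar>lam\<bar> ^ (2 * k + j))"
    if "0 < q" "q < 1" "0 < c" and equiv: "(\<lambda>k. \<bar>s k - lim s\<bar>) \<sim>[sequentially] (\<lambda>k. c * q ^ k)"
    for q c :: real
  proof (intro exI conjI)
    have "c * q ^ k = c / sqrt q ^ j * \<bar>sqrt q\<bar> ^ (2 * k + j)" for k
      using \<open>0 < q\<close> by (simp add: power_add power_mult)
    with equiv show "(\<lambda>k. \<bar>s k - lim s\<bar>) \<sim>[sequentially] (\<lambda>k. c / sqrt q ^ j * \<bar>sqrt q\<bar> ^ (2 * k + j))"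
      by simp
    show "-1 < sqrt q"
      using real_sqrt_ge_zero[of q] \<open>0 < q\<close> by linarith
  qed (use that in auto)
  then show ?thesis
    using bounded_expsum_asymp[OF assms] by blast
qed

section \<open>Transportation problems with exponential-sum marginals\<close>

definition supported_on :: "('a \<times> 'a) set \<Rightarrow> ('a \<Rightarrow> 'a \<Rightarrow> real) \<Rightarrow> bool" where
  "supported_on S T \<longleftrightarrow> (\<forall>x y. (x, y) \<notin> S \<longrightarrow> T x y = 0)"

definition marginals :: "'a set \<Rightarrow> ('a \<Rightarrow> 'a \<Rightarrow> real) \<Rightarrow> 'a + 'a \<Rightarrow> real" where
  "marginals V T j = (case j of
      Inl x \<Rightarrow> if x \<in> V then (\<Sum>y\<in>V. T x y) else 0
    | Inr y \<Rightarrow> if y \<in> V then (\<Sum>x\<in>V. T x y) else 0)"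

text \<open>Independent supports are the supports of basic solutions: the columns of the constraint
  matrix of the transportation problem that they index are linearly independent.\<close>

definition independent_support :: "'a set \<Rightarrow> ('a \<times> 'a) set \<Rightarrow> bool" where
  "independent_support V S \<longleftrightarrow> (\<forall>z. supported_on S z \<and> marginals V z = 0 \<longrightarrow> z = 0)"

definition transport_cost :: "'a set \<Rightarrow> ('a \<Rightarrow> 'a \<Rightarrow> real) \<Rightarrow> ('a \<Rightarrow> 'a \<Rightarrow> real) \<Rightarrow> real" where
  "transport_cost V c T = (\<Sum>x\<in>V. \<Sum>y\<in>V. c x y * T x y)"

lemma marginals_eq_0_iff:
  "marginals V z = 0 \<longleftrightarrow> (\<forall>x\<in>V. (\<Sum>y\<in>V. z x y) = 0) \<and> (\<forall>y\<in>V. (\<Sum>x\<in>V. z x y) = 0)"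
  by (auto simp: fun_eq_iff marginals_def split: sum.split)

lemma marginals_coupling:
  assumes "coupling V \<mu> \<nu> T"
  shows "marginals V T (Inl x) = (if x \<in> V then \<mu> x else 0)"
    and "marginals V T (Inr y) = (if y \<in> V then \<nu> y else 0)"
  using assms by (simp_all add: marginals_def coupling_def)

lemma sum_fun_apply: "sum F A x = (\<Sum>a\<in>A. F a x)"
  for F :: "'i \<Rightarrow> 'a \<Rightarrow> 'b::comm_monoid_add"
  by (induction A rule: infinite_finite_induct) simp_all

lemma independent_support_reconstruction:
  fixes V :: "'a set" and S :: "('a \<times> 'a) set"
  assumes finV: "finite V" and SV: "S \<subseteq> V \<times> V" and indep: "independent_support V S"
  obtains h :: "'a + 'a \<Rightarrow> 'a \<Rightarrow> 'a \<Rightarrow> real" where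
    "\<And>T x y. supported_on S T \<Longrightarrow> T x y = (\<Sum>j\<in>Inl ` V \<union> Inr ` V. marginals V T j * h j x y)"
proof -
  define scale2 where "scale2 = (\<lambda>(r::real) (T::'a \<Rightarrow> 'a \<Rightarrow> real) x y. r * T x y)"
  define scale1 where "scale1 = (\<lambda>(r::real) (b::'a + 'a \<Rightarrow> real) j. r * b j)"
  interpret vector_space_pair scale2 scale1
    unfolding vector_space_pair_def Vector_Spaces.vector_space_def scale1_def scale2_def
    by (simp add: fun_eq_iff algebra_simps)
  have lin: "Vector_Spaces.linear scale2 scale1 (marginals V)"
    unfolding Vector_Spaces.linear_iff
  proof (intro conjI allI vs1.vector_space_axioms vs2.vector_space_axioms)
    show "marginals V (T1 + T2) = marginals V T1 + marginals V T2" for T1 T2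
      by (auto simp: fun_eq_iff marginals_def sum.distrib split: sum.split)
    show "marginals V (scale2 r T) = scale1 r (marginals V T)" for r T
      by (auto simp: scale1_def scale2_def fun_eq_iff marginals_def sum_distrib_left split: sum.split)
  qed
  define delta where "delta p = (\<lambda>x y. if (x, y) = p then 1 else 0 :: real)" for p :: "'a \<times> 'a"
  have finS: "finite S"
    using SV finV by (meson finite_SigmaI finite_subset)
  have span_supported: "vs1.span (delta ` S) = {T. supported_on S T}"
  proof
    have "vs1.subspace {T. supported_on S T}"
      unfolding vs1.subspace_def by (simp add: supported_on_def scale2_def)
    then show "vs1.span (delta ` S) \<subseteq> {T. supported_on S T}"
      by (rule vs1.span_minimal[rotated]) (auto simp: supported_on_def delta_def)
  next
    show "{T. supported_on S T} \<subseteq> vs1.span (delta ` S)"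
    proof
      fix T assume "T \<in> {T. supported_on S T}"
      then have "T = (\<Sum>p\<in>S. scale2 (T (fst p) (snd p)) (delta p))"
        using finS by (auto simp: fun_eq_iff sum_fun_apply scale2_def delta_def supported_on_def
            if_distrib[of "\<lambda>b. _ * b"] sum.delta' cong: if_cong)
      also have "\<dots> \<in> vs1.span (delta ` S)"
        by (intro vs1.span_sum vs1.span_scale vs1.span_base) simp
      finally show "T \<in> vs1.span (delta ` S)" .
    qed
  qed
  have "inj_on (marginals V) (vs1.span (delta ` S))"
    unfolding linear_inj_on_iff_eq_0[OF lin vs1.subspace_span]
    using indep unfolding span_supported independent_support_def by blast
  then obtain g where glin: "Vector_Spaces.linear scale1 scale2 g"
    and ginv: "\<And>T. T \<in> vs1.span (delta ` S) \<Longrightarrow> g (marginals V T) = T"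
    using linear_inj_on_left_inverse[OF lin] by blast
  interpret inv: vector_space_pair scale1 scale2
    by unfold_locales
  define J where "J = Inl ` V \<union> Inr ` V"
  define e where "e j = (\<lambda>j'. if j' = j then 1 else 0 :: real)" for j :: "'a + 'a"
  show ?thesis
  proof (rule that[of "\<lambda>j. g (e j)"])
    fix T x y assume supp: "supported_on S T"
    have "marginals V T = (\<Sum>j\<in>J. scale1 (marginals V T j) (e j))"
      using finV by (auto simp: fun_eq_iff sum_fun_apply scale1_def e_def J_def marginals_def
          if_distrib[of "\<lambda>b. _ * b"] sum.delta cong: if_cong split: sum.split)
    then have "T = g (\<Sum>j\<in>J. scale1 (marginals V T j) (e j))"
      using ginv[of T] supp unfolding span_supported by simp
    also have "\<dots> = (\<Sum>j\<in>J. scale2 (marginals V T j) (g (e j)))"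
      by (simp add: inv.linear_sum[OF glin] inv.linear_scale[OF glin])
    finally have "T x y = (\<Sum>j\<in>J. scale2 (marginals V T j) (g (e j))) x y"
      by simp
    then show "T x y = (\<Sum>j\<in>Inl ` V \<union> Inr ` V. marginals V T j * g (e j) x y)"
      by (simp add: J_def sum_fun_apply scale2_def)
  qed
qed

lemma dependent_support_negative_entry:
  assumes "finite V" "S \<subseteq> V \<times> V" "supported_on S z" "marginals V z = 0" "z \<noteq> 0"
  shows "\<exists>(x, y)\<in>S. z x y < 0"
proof (rule ccontr)
  assume "\<not> (\<exists>(x, y)\<in>S. z x y < 0)"
  with assms(2,3) have nonneg: "0 \<le> z x y" for x y
    unfolding supported_on_def by (cases "(x, y) \<in> S") auto
  have "z x y = 0" for x y
  proof (cases "x \<in> V \<and> y \<in> V")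
    case True
    then have "(\<Sum>y\<in>V. z x y) = 0"
      using assms(4) unfolding marginals_eq_0_iff by blast
    with True show ?thesis
      using assms(1) nonneg sum_nonneg_eq_0_iff by blast
  next
    case False
    then show ?thesis
      using assms(2,3) unfolding supported_on_def by blast
  qed
  with assms(5) show False by (simp add: fun_eq_iff)
qed

lemma dependent_support_descent_direction:
  assumes "\<not> independent_support V S"
  obtains z where "supported_on S z" "marginals V z = 0" "z \<noteq> 0" "transport_cost V c z \<le> 0"
proof -
  obtain z where z: "supported_on S z" "marginals V z = 0" "z \<noteq> 0"
    using assms unfolding independent_support_def by blast
  show ?thesis
  proof (cases "transport_cost V c z \<le> 0")
    case False
    have "supported_on S (- z)" "marginals V (- z) = 0" "- z \<noteq> 0"
      using z by (auto simp: supported_on_def marginals_eq_0_iff sum_negf)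
    moreover have "transport_cost V c (- z) \<le> 0"
      using False by (simp add: transport_cost_def sum_negf)
    ultimately show ?thesis by (rule that)
  qed (use z that in blast)
qed

lemma coupling_add_zero_marginals:
  assumes "coupling V \<mu> \<nu> T" "marginals V z = 0"
    and "\<And>x y. x \<in> V \<Longrightarrow> y \<in> V \<Longrightarrow> 0 \<le> T x y + t * z x y"
  shows "coupling V \<mu> \<nu> (\<lambda>x y. T x y + t * z x y)"
  using assms unfolding coupling_def marginals_eq_0_iff
  by (simp add: sum.distrib flip: sum_distrib_left)

text \<open>One pivoting step of the simplex method: move along a zero-marginal direction of
  non-positive cost until the first entry of the plan vanishes.\<close>

lemma coupling_shrink_dependent_support:
  assumes finV: "finite V" and SV: "S \<subseteq> V \<times> V" and cT: "coupling V \<mu> \<nu> T"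
    and supp: "supported_on S T" and dep: "\<not> independent_support V S"
  obtains p T' where "p \<in> S" "coupling V \<mu> \<nu> T'" "supported_on (S - {p}) T'"
    "transport_cost V c T' \<le> transport_cost V c T"
proof -
  obtain z where z: "supported_on S z" "marginals V z = 0" "z \<noteq> 0"
    and cost_z: "transport_cost V c z \<le> 0"
    using dep by (rule dependent_support_descent_direction)
  define N where "N = {(x, y)\<in>S. z x y < 0}"
  define ratio where "ratio = (\<lambda>(x, y). T x y / - z x y)"
  have "N \<subseteq> S" unfolding N_def by auto
  then have finN: "finite N"
    using SV finV by (meson finite_SigmaI finite_subset)
  have "N \<noteq> {}"
    using dependent_support_negative_entry[OF finV SV z] unfolding N_def by blast
  then obtain p where pN: "p \<in> N" and p_min: "\<And>q. q \<in> N \<Longrightarrow> ratio p \<le> ratio q"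
    using finN by (metis (no_types, lifting) arg_min_if_finite(1,2) linorder_not_le)
  define t where "t = ratio p"
  define T' where "T' = (\<lambda>x y. T x y + t * z x y)"
  obtain x0 y0 where p: "p = (x0, y0)" "(x0, y0) \<in> S" "z x0 y0 < 0"
    using pN unfolding N_def by auto
  have T_nonneg: "0 \<le> T x y" if "(x, y) \<in> S" for x y
    using cT SV that unfolding coupling_def by blast
  have t_nonneg: "0 \<le> t"
    using T_nonneg[OF p(2)] p(3) unfolding t_def ratio_def p by (simp add: divide_nonneg_neg)
  have supp': "supported_on (S - {p}) T'"
    using supp z(1) p unfolding supported_on_def T'_def t_def ratio_def by auto
  have "0 \<le> T' x y" for x y
  proof (cases "(x, y) \<in> S")
    case in_S: True
    show ?thesis
    proof (cases "z x y < 0")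
      case True
      then have "t \<le> T x y / - z x y"
        using p_min[of "(x, y)"] in_S unfolding t_def ratio_def N_def by simp
      with True have "t * - z x y \<le> T x y"
        by (metis neg_0_less_iff_less pos_le_divide_eq)
      then show ?thesis unfolding T'_def by simp
    qed (use T_nonneg[OF in_S] t_nonneg in \<open>simp add: T'_def\<close>)
  qed (use supp' in \<open>simp add: supported_on_def\<close>)
  then have "coupling V \<mu> \<nu> T'"
    unfolding T'_def using cT z(2) by (intro coupling_add_zero_marginals) auto
  moreover have "transport_cost V c T' = transport_cost V c T + t * transport_cost V c z"
    by (simp add: transport_cost_def T'_def algebra_simps sum.distrib sum_distrib_left)
  then have "transport_cost V c T' \<le> transport_cost V c T"
    using t_nonneg cost_z by (simp add: mult_nonneg_nonpos)
  ultimately show ?thesis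
    using that p(2) supp' unfolding p by blast
qed

lemma coupling_independent_support:
  assumes finV: "finite V" and cT: "coupling V \<mu> \<nu> T"
  obtains S T' where "S \<subseteq> V \<times> V" "independent_support V S" "coupling V \<mu> \<nu> T'"
    "supported_on S T'" "transport_cost V c T' \<le> transport_cost V c T"
proof -
  have "\<exists>S' T'. S' \<subseteq> V \<times> V \<and> independent_support V S' \<and> coupling V \<mu> \<nu> T' \<and>
      supported_on S' T' \<and> transport_cost V c T' \<le> transport_cost V c T0"
    if "finite S" "S \<subseteq> V \<times> V" "coupling V \<mu> \<nu> T0" "supported_on S T0" for S T0
    using that
  proof (induction S arbitrary: T0 rule: finite_psubset_induct)
    case (psubset S)
    show ?case
    proof (cases "independent_support V S")
      case False
      obtain p T' where p: "p \<in> S" and T': "coupling V \<mu> \<nu> T'" "supported_on (S - {p}) T'"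
        and cost: "transport_cost V c T' \<le> transport_cost V c T0"
        using coupling_shrink_dependent_support[OF finV psubset.prems(1-3) False] .
      have "S - {p} \<subset> S" "S - {p} \<subseteq> V \<times> V"
        using p psubset.prems(1) by blast+
      with psubset.IH T' cost show ?thesis
        by (meson order.trans)
    qed (use psubset.prems in blast)
  qed
  note reduce = this
  define T0 where "T0 = (\<lambda>x y. if x \<in> V \<and> y \<in> V then T x y else 0)"
  have "coupling V \<mu> \<nu> T0"
    using cT unfolding coupling_def T0_def by (simp cong: sum.cong)
  moreover have "transport_cost V c T0 = transport_cost V c T"
    unfolding transport_cost_def T0_def by (simp cong: sum.cong)
  moreover have "supported_on (V \<times> V) T0"
    unfolding supported_on_def T0_def by simp
  ultimately show ?thesis
    using reduce[of "V \<times> V" T0] finV that by auto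
qed

definition eventually_decided :: "(nat \<Rightarrow> bool) \<Rightarrow> bool" where
  "eventually_decided P \<longleftrightarrow> (\<forall>\<^sub>F k in sequentially. P k) \<or> (\<forall>\<^sub>F k in sequentially. \<not> P k)"

lemma eventually_decidedI:
  "(\<forall>\<^sub>F k in sequentially. P k) \<Longrightarrow> eventually_decided P"
  "(\<forall>\<^sub>F k in sequentially. \<not> P k) \<Longrightarrow> eventually_decided P"
  unfolding eventually_decided_def by simp_all

lemma eventually_decided_conj:
  assumes "eventually_decided P" "eventually_decided Q"
  shows "eventually_decided (\<lambda>k. P k \<and> Q k)"
proof -
  consider "\<forall>\<^sub>F k in sequentially. P k" "\<forall>\<^sub>F k in sequentially. Q k"
    | "\<forall>\<^sub>F k in sequentially. \<not> P k" | "\<forall>\<^sub>F k in sequentially. \<not> Q k"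
    using assms unfolding eventually_decided_def by blast
  then show ?thesis
    by cases (auto intro: eventually_decidedI eventually_conj elim: eventually_mono)
qed

lemma eventually_decided_ball:
  assumes "finite A" "\<And>a. a \<in> A \<Longrightarrow> eventually_decided (P a)"
  shows "eventually_decided (\<lambda>k. \<forall>a\<in>A. P a k)"
  using assms
proof (induction A rule: finite_induct)
  case (insert a A)
  then have "eventually_decided (\<lambda>k. P a k \<and> (\<forall>a\<in>A. P a k))"
    by (intro eventually_decided_conj) auto
  then show ?case by simp
qed (simp add: eventually_decided_def)

lemma eventually_decided_expsum_nonneg:
  assumes "eventually_expsum s"
  shows "eventually_decided (\<lambda>k. 0 \<le> s k)"
  using eventually_expsum_sign_cases[OF assms]
proof (elim disjE)
  assume "\<forall>\<^sub>F k in sequentially. s k < 0"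
  then show ?thesis
    by (intro eventually_decidedI(2)) (auto elim: eventually_mono)
qed (intro eventually_decidedI(1), auto elim: eventually_mono)+

lemma eventually_decided_expsum_eq:
  assumes "eventually_expsum s" "eventually_expsum t"
  shows "eventually_decided (\<lambda>k. s k = t k)"
  using eventually_expsum_sign_cases[OF eventually_expsum_diff[OF assms]]
proof (elim disjE)
  assume "\<forall>\<^sub>F k in sequentially. s k - t k = 0"
  then show ?thesis
    by (intro eventually_decidedI(1)) (auto elim: eventually_mono)
qed (intro eventually_decidedI(2), auto elim: eventually_mono)+

lemma eventually_decided_coupling:
  assumes "finite V"
    and "\<And>x. x \<in> V \<Longrightarrow> eventually_expsum (\<lambda>k. \<mu>s k x)"
    and "\<And>y. y \<in> V \<Longrightarrow> eventually_expsum (\<lambda>k. \<nu>s k y)"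
    and "\<And>x y. x \<in> V \<Longrightarrow> y \<in> V \<Longrightarrow> eventually_expsum (\<lambda>k. Ts k x y)"
  shows "eventually_decided (\<lambda>k. coupling V (\<mu>s k) (\<nu>s k) (Ts k))"
  unfolding coupling_def
  by (intro eventually_decided_conj eventually_decided_ball eventually_decided_expsum_nonneg
      eventually_decided_expsum_eq eventually_expsum_sum assms)

lemma eventually_expsum_Inf:
  fixes A :: "nat \<Rightarrow> real set" and val :: "'b \<Rightarrow> nat \<Rightarrow> real"
  assumes finB: "finite B"
    and decided: "\<And>b. b \<in> B \<Longrightarrow> eventually_decided (admissible b)"
    and val: "\<And>b. b \<in> B \<Longrightarrow> eventually_expsum (val b)"
    and val_in: "\<And>b k. b \<in> B \<Longrightarrow> admissible b k \<Longrightarrow> val b k \<in> A k"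
    and val_le: "\<And>a k. a \<in> A k \<Longrightarrow> \<exists>b\<in>B. admissible b k \<and> val b k \<le> a"
  shows "eventually_expsum (\<lambda>k. Inf (A k))"
proof -
  define F where "F = {b\<in>B. \<forall>\<^sub>F k in sequentially. admissible b k}"
  have finF: "finite F" using finB unfolding F_def by simp
  have "\<forall>\<^sub>F k in sequentially. admissible b k \<longleftrightarrow> b \<in> F" if b: "b \<in> B" for b
  proof -
    consider "\<forall>\<^sub>F k in sequentially. admissible b k" | "\<forall>\<^sub>F k in sequentially. \<not> admissible b k"
      using decided[OF b] unfolding eventually_decided_def by blast
    then show ?thesis
    proof cases
      case 2
      then have "b \<notin> F"
        unfolding F_def by (auto dest: eventually_conj)
      with 2 show ?thesis by (auto elim: eventually_mono)
    qed (use b in \<open>auto simp: F_def elim: eventually_mono\<close>)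
  qed
  then have evF: "\<forall>\<^sub>F k in sequentially. \<forall>b\<in>B. admissible b k \<longleftrightarrow> b \<in> F"
    by (intro eventually_ball_finite finB) blast
  show ?thesis
  proof (cases "F = {}")
    case True
    have "\<forall>\<^sub>F k in sequentially. Inf {} = Inf (A k)"
      using evF
    proof eventually_elim
      case (elim k)
      with True val_le have "A k = {}" by fastforce
      then show ?case by simp
    qed
    then show ?thesis
      by (rule eventually_expsum_cong[OF eventually_expsum_const])
  next
    case False
    have "eventually_expsum (\<lambda>k. Min ((\<lambda>b. val b k) ` F))"
      using finF False val unfolding F_def by (intro eventually_expsum_Min) auto
    moreover have "\<forall>\<^sub>F k in sequentially. Min ((\<lambda>b. val b k) ` F) = Inf (A k)"
      using evF
    proof eventually_elim
      case (elim k)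
      show ?case
      proof (rule cInf_eq_minimum[symmetric])
        have "Min ((\<lambda>b. val b k) ` F) \<in> (\<lambda>b. val b k) ` F"
          using finF False by (intro Min_in) auto
        then obtain b where "b \<in> F" "Min ((\<lambda>b. val b k) ` F) = val b k"
          by blast
        then show "Min ((\<lambda>b. val b k) ` F) \<in> A k"
          using elim val_in unfolding F_def by auto
        show "Min ((\<lambda>b. val b k) ` F) \<le> a" if "a \<in> A k" for a
          using val_le[OF that] elim finF by (auto intro: order.trans[OF Min_le])
      qed
    qed
    ultimately show ?thesis
      by (rule eventually_expsum_cong)
  qed
qed

text \<open>A coupling supported on an independent support \<open>S\<close> is a linear function of its
  marginals; \<open>plan S k\<close> is this function evaluated at the marginals of index \<open>k\<close>.\<close>

lemma basic_plans_exist: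
  fixes V :: "'a set" and \<mu>s \<nu>s :: "nat \<Rightarrow> 'a \<Rightarrow> real"
  assumes finV: "finite V"
    and \<mu>s: "\<And>x. x \<in> V \<Longrightarrow> eventually_expsum (\<lambda>k. \<mu>s k x)"
    and \<nu>s: "\<And>y. y \<in> V \<Longrightarrow> eventually_expsum (\<lambda>k. \<nu>s k y)"
  obtains plan :: "('a \<times> 'a) set \<Rightarrow> nat \<Rightarrow> 'a \<Rightarrow> 'a \<Rightarrow> real" where
    "\<And>S k. supported_on S (plan S k)"
    "\<And>S k T. S \<subseteq> V \<times> V \<Longrightarrow> independent_support V S \<Longrightarrow> coupling V (\<mu>s k) (\<nu>s k) T \<Longrightarrow>
      supported_on S T \<Longrightarrow> T = plan S k"
    "\<And>S x y. eventually_expsum (\<lambda>k. plan S k x y)"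
proof -
  define J where "J = Inl ` V \<union> Inr ` V"
  define target where "target k j = (case j of Inl x \<Rightarrow> \<mu>s k x | Inr y \<Rightarrow> \<nu>s k y)" for k j
  define B where "B = {S. S \<subseteq> V \<times> V \<and> independent_support V S}"
  have "\<forall>S\<in>B. \<exists>h. \<forall>T x y. supported_on S T \<longrightarrow> T x y = (\<Sum>j\<in>J. marginals V T j * h j x y)"
  proof
    fix S assume "S \<in> B"
    then have "S \<subseteq> V \<times> V" "independent_support V S"
      unfolding B_def by auto
    then obtain h where "\<And>T x y. supported_on S T \<Longrightarrow>
        T x y = (\<Sum>j\<in>Inl ` V \<union> Inr ` V. marginals V T j * h j x y)"
      using independent_support_reconstruction[OF finV] by blast
    then show "\<exists>h. \<forall>T x y. supported_on S T \<longrightarrow> T x y = (\<Sum>j\<in>J. marginals V T j * h j x y)"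
      unfolding J_def by blast
  qed
  then obtain h where h: "\<forall>S\<in>B. \<forall>T x y. supported_on S T \<longrightarrow>
      T x y = (\<Sum>j\<in>J. marginals V T j * h S j x y)"
    by (rule bchoice[THEN exE])
  define plan where
    "plan S k x y = (if (x, y) \<in> S then \<Sum>j\<in>J. target k j * h S j x y else 0)" for S k x y
  show ?thesis
  proof (rule that[of plan])
    show "supported_on S (plan S k)" for S k
      unfolding supported_on_def plan_def by simp
    show "T = plan S k"
      if "S \<subseteq> V \<times> V" "independent_support V S" and cT: "coupling V (\<mu>s k) (\<nu>s k) T"
        and supp: "supported_on S T" for S k T
    proof (intro ext)
      fix x y
      have "marginals V T j = target k j" if "j \<in> J" for j
        using that marginals_coupling[OF cT] unfolding J_def target_def by auto
      moreover have "T x y = (\<Sum>j\<in>J. marginals V T j * h S j x y)"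
        using that h supp unfolding B_def by blast
      ultimately show "T x y = plan S k x y"
        using supp unfolding plan_def supported_on_def by auto
    qed
    show "eventually_expsum (\<lambda>k. plan S k x y)" for S x y
    proof -
      have "eventually_expsum (\<lambda>k. target k j)" if "j \<in> J" for j
        using that \<mu>s \<nu>s unfolding J_def target_def by auto
      then have "eventually_expsum (\<lambda>k. \<Sum>j\<in>J. h S j x y * target k j)"
        by (intro eventually_expsum_sum eventually_expsum_cmult)
      then show ?thesis
        unfolding plan_def by (cases "(x, y) \<in> S") (simp_all add: mult.commute eventually_expsum_const)
    qed
  qed
qed

lemma eventually_expsum_optimal_transport:
  fixes V :: "'a set" and c :: "'a \<Rightarrow> 'a \<Rightarrow> real" and \<mu>s \<nu>s :: "nat \<Rightarrow> 'a \<Rightarrow> real"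
  assumes finV: "finite V"
    and \<mu>s: "\<And>x. x \<in> V \<Longrightarrow> eventually_expsum (\<lambda>k. \<mu>s k x)"
    and \<nu>s: "\<And>y. y \<in> V \<Longrightarrow> eventually_expsum (\<lambda>k. \<nu>s k y)"
  shows "eventually_expsum (\<lambda>k. Inf {transport_cost V c T | T. coupling V (\<mu>s k) (\<nu>s k) T})"
proof -
  obtain plan where supp: "\<And>S k. supported_on S (plan S k)"
    and unique: "\<And>S k T. S \<subseteq> V \<times> V \<Longrightarrow> independent_support V S \<Longrightarrow>
      coupling V (\<mu>s k) (\<nu>s k) T \<Longrightarrow> supported_on S T \<Longrightarrow> T = plan S k"
    and plan_expsum: "\<And>S x y. eventually_expsum (\<lambda>k. plan S k x y)"
    using basic_plans_exist[of V \<mu>s \<nu>s, OF finV \<mu>s \<nu>s] by blast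
  define B where "B = {S. S \<subseteq> V \<times> V \<and> independent_support V S}"
  show ?thesis
  proof (rule eventually_expsum_Inf[where admissible = "\<lambda>S k. coupling V (\<mu>s k) (\<nu>s k) (plan S k)"
        and val = "\<lambda>S k. transport_cost V c (plan S k)" and B = B])
    have "B \<subseteq> Pow (V \<times> V)" unfolding B_def by blast
    then show "finite B"
      using finV by (simp add: finite_subset)
    show "eventually_decided (\<lambda>k. coupling V (\<mu>s k) (\<nu>s k) (plan S k))" for S
      by (rule eventually_decided_coupling[OF finV \<mu>s \<nu>s plan_expsum])
    show "eventually_expsum (\<lambda>k. transport_cost V c (plan S k))" for S
      unfolding transport_cost_def by (intro eventually_expsum_sum eventually_expsum_cmult plan_expsum)
    show "transport_cost V c (plan S k) \<in> {transport_cost V c T | T. coupling V (\<mu>s k) (\<nu>s k) T}"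
      if "coupling V (\<mu>s k) (\<nu>s k) (plan S k)" for S k
      using that by blast
    show "\<exists>S\<in>B. coupling V (\<mu>s k) (\<nu>s k) (plan S k) \<and> transport_cost V c (plan S k) \<le> a"
      if a_in: "a \<in> {transport_cost V c T | T. coupling V (\<mu>s k) (\<nu>s k) T}" for a k
    proof -
      obtain T where a: "a = transport_cost V c T" and cT: "coupling V (\<mu>s k) (\<nu>s k) T"
        using a_in by blast
      obtain S T' where "S \<subseteq> V \<times> V" "independent_support V S" "coupling V (\<mu>s k) (\<nu>s k) T'"
        "supported_on S T'" "transport_cost V c T' \<le> transport_cost V c T"
        using coupling_independent_support[OF finV cT] .
      moreover from this have "S \<in> B" "T' = plan S k"
        using unique unfolding B_def by blast+
      ultimately show ?thesis
        unfolding a by blast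
    qed
  qed
qed

section \<open>Spectral expansion for a reversible kernel\<close>

locale reversible_kernel =
  fixes V :: "'a set" and P :: "'a \<Rightarrow> 'a \<Rightarrow> real" and d :: "'a \<Rightarrow> real"
  assumes finite_V: "finite V"
    and weight_pos: "\<And>x. x \<in> V \<Longrightarrow> 0 < d x"
    and detailed_balance: "\<And>x y. x \<in> V \<Longrightarrow> y \<in> V \<Longrightarrow> d x * P x y = d y * P y x"
begin

definition evolve :: "('a \<Rightarrow> complex) \<Rightarrow> 'a \<Rightarrow> complex" where
  "evolve f y = (if y \<in> V then \<Sum>x\<in>V. f x * of_real (P x y) else 0)"

definition supported :: "('a \<Rightarrow> complex) \<Rightarrow> bool" where
  "supported f \<longleftrightarrow> (\<forall>y. y \<notin> V \<longrightarrow> f y = 0)"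

definition shift :: "complex \<Rightarrow> ('a \<Rightarrow> complex) \<Rightarrow> 'a \<Rightarrow> complex" where
  "shift e f = (\<lambda>y. evolve f y - e * f y)"

fun shift_prod :: "complex list \<Rightarrow> ('a \<Rightarrow> complex) \<Rightarrow> 'a \<Rightarrow> complex" where
  "shift_prod [] f = f"
| "shift_prod (e # es) f = shift e (shift_prod es f)"

text \<open>The inner product for which \<open>evolve\<close> is self-adjoint, by detailed balance.\<close>

definition inner_w :: "('a \<Rightarrow> complex) \<Rightarrow> ('a \<Rightarrow> complex) \<Rightarrow> complex" where
  "inner_w f g = (\<Sum>y\<in>V. cnj (f y) * g y / of_real (d y))"

lemma evolve_add: "evolve (\<lambda>y. f y + g y) = (\<lambda>y. evolve f y + evolve g y)"
  by (simp add: fun_eq_iff evolve_def distrib_right sum.distrib)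

lemma evolve_diff: "evolve (\<lambda>y. f y - g y) = (\<lambda>y. evolve f y - evolve g y)"
  by (simp add: fun_eq_iff evolve_def left_diff_distrib sum_subtractf)

lemma evolve_cmult: "evolve (\<lambda>y. c * f y) = (\<lambda>y. c * evolve f y)"
  by (simp add: fun_eq_iff evolve_def sum_distrib_left mult.assoc)

lemma evolve_zero: "evolve (\<lambda>y. 0) = (\<lambda>y. 0)"
  by (simp add: fun_eq_iff evolve_def)

lemma evolve_sum: "evolve (\<lambda>y. \<Sum>i\<in>I. F i y) = (\<lambda>y. \<Sum>i\<in>I. evolve (F i) y)"
  by (induction I rule: infinite_finite_induct) (simp_all add: evolve_zero evolve_add)

lemma evolve_pow_eigen_sum:
  assumes "\<And>e. e \<in> S \<Longrightarrow> evolve (G e) = (\<lambda>y. e * G e y)"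
  shows "(evolve ^^ k) (\<lambda>y. \<Sum>e\<in>S. G e y) = (\<lambda>y. \<Sum>e\<in>S. e ^ k * G e y)"
proof (induction k)
  case (Suc k)
  then show ?case
    using assms by (simp add: evolve_sum evolve_cmult mult.assoc mult.left_commute)
qed simp

lemma supported_evolve: "supported (evolve f)"
  by (simp add: supported_def evolve_def)

lemma supported_evolve_pow: "supported g \<Longrightarrow> supported ((evolve ^^ k) g)"
  by (induction k) (simp_all add: supported_evolve)

lemma supported_shift: "supported f \<Longrightarrow> supported (shift e f)"
  by (simp add: supported_def shift_def evolve_def)

lemma supported_shift_prod: "supported f \<Longrightarrow> supported (shift_prod es f)"
  by (induction es) (simp_all add: supported_shift)

lemma shift_commute: "shift a (shift b f) = shift b (shift a f)"
  by (simp add: fun_eq_iff shift_def evolve_diff evolve_cmult algebra_simps)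

lemma shift_prod_shift: "shift_prod es (shift e f) = shift e (shift_prod es f)"
  by (induction es) (simp_all add: shift_commute)

lemma shift_prod_remove1: "e \<in> set es \<Longrightarrow> shift_prod es f = shift e (shift_prod (remove1 e es) f)"
  by (induction es) (auto simp: shift_commute)

lemma inner_w_evolve: "inner_w (evolve f) g = inner_w f (evolve g)"
proof -
  have "inner_w (evolve f) g = (\<Sum>y\<in>V. \<Sum>x\<in>V. cnj (f x) * g y * of_real (P x y / d y))"
    unfolding inner_w_def
  proof (intro sum.cong refl)
    fix y assume "y \<in> V"
    then have "cnj (evolve f y) * g y / of_real (d y)
        = (\<Sum>x\<in>V. cnj (f x * of_real (P x y)) * g y / of_real (d y))"
      by (simp add: evolve_def cnj_sum sum_distrib_right sum_divide_distrib)
    then show "cnj (evolve f y) * g y / of_real (d y)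
        = (\<Sum>x\<in>V. cnj (f x) * g y * of_real (P x y / d y))"
      by (simp add: mult_ac)
  qed
  also have "\<dots> = (\<Sum>x\<in>V. \<Sum>y\<in>V. cnj (f x) * g y * of_real (P y x / d x))"
  proof (subst sum.swap, intro sum.cong refl)
    fix x y assume "x \<in> V" "y \<in> V"
    then have "P x y / d y = P y x / d x"
      using detailed_balance[of x y] weight_pos[of x] weight_pos[of y] by (simp add: field_simps)
    then show "cnj (f x) * g y * of_real (P x y / d y) = cnj (f x) * g y * of_real (P y x / d x)"
      by simp
  qed
  also have "\<dots> = inner_w f (evolve g)"
    unfolding inner_w_def
  proof (intro sum.cong refl)
    fix x assume "x \<in> V"
    then show "(\<Sum>y\<in>V. cnj (f x) * g y * of_real (P y x / d x)) = cnj (f x) * evolve g x / of_real (d x)"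
      by (simp add: evolve_def sum_distrib_left sum_divide_distrib mult_ac)
  qed
  finally show ?thesis .
qed

lemma inner_w_cmult_left: "inner_w (\<lambda>y. c * f y) g = cnj c * inner_w f g"
  and inner_w_cmult_right: "inner_w f (\<lambda>y. c * g y) = c * inner_w f g"
  and inner_w_diff_left: "inner_w (\<lambda>y. f y - f' y) g = inner_w f g - inner_w f' g"
  and inner_w_diff_right: "inner_w f (\<lambda>y. g y - g' y) = inner_w f g - inner_w f g'"
  by (simp_all add: inner_w_def sum_distrib_left sum_subtractf algebra_simps diff_divide_distrib)

lemma inner_w_self_eq_0:
  assumes "supported f" "inner_w f f = 0"
  shows "f = (\<lambda>y. 0)"
proof -
  have "cnj (f y) * f y = of_real ((cmod (f y))\<^sup>2)" for y
    by (metis complex_norm_square mult.commute of_real_power)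
  then have "inner_w f f = of_real (\<Sum>y\<in>V. (cmod (f y))\<^sup>2 / d y)"
    unfolding inner_w_def of_real_sum by simp
  with assms(2) have "(\<Sum>y\<in>V. (cmod (f y))\<^sup>2 / d y) = 0"
    by (metis of_real_eq_0_iff)
  then have "\<forall>y\<in>V. (cmod (f y))\<^sup>2 / d y = 0"
    using finite_V weight_pos by (subst (asm) sum_nonneg_eq_0_iff) (auto intro: divide_nonneg_pos)
  then show ?thesis
    using assms(1) weight_pos unfolding supported_def by (force simp: fun_eq_iff)
qed

lemma eigenvector_nonreal_eq_0:
  assumes "cnj e \<noteq> e" "supported h" "shift e h = (\<lambda>y. 0)"
  shows "h = (\<lambda>y. 0)"
proof (rule ccontr)
  assume "h \<noteq> (\<lambda>y. 0)"
  then have nz: "inner_w h h \<noteq> 0"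
    using inner_w_self_eq_0[OF assms(2)] by blast
  have eig: "evolve h = (\<lambda>y. e * h y)"
    using assms(3) by (simp add: shift_def fun_eq_iff)
  have "cnj e * inner_w h h = e * inner_w h h"
    using inner_w_evolve[of h h] unfolding eig inner_w_cmult_left inner_w_cmult_right .
  with nz assms(1) show False by simp
qed

lemma shift_shift_real_eq_0:
  assumes "cnj e = e" "supported h" "shift e (shift e h) = (\<lambda>y. 0)"
  shows "shift e h = (\<lambda>y. 0)"
proof -
  have "inner_w (shift e h) (shift e h) = inner_w (evolve h) (shift e h) - cnj e * inner_w h (shift e h)"
    by (simp add: shift_def inner_w_diff_left inner_w_cmult_left)
  also have "\<dots> = inner_w h (shift e (shift e h))"
    using assms(1) by (simp add: inner_w_evolve shift_def[of e "shift e h"] inner_w_diff_right inner_w_cmult_right)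
  also have "\<dots> = 0"
    unfolding assms(3) by (simp add: inner_w_def)
  finally show ?thesis
    using inner_w_self_eq_0 supported_shift[OF assms(2)] by blast
qed

lemma shift_prod_distinct_real:
  assumes "supported g" "shift_prod es g = (\<lambda>y. 0)"
  shows "\<exists>es'. distinct es' \<and> (\<forall>e\<in>set es'. cnj e = e) \<and> shift_prod es' g = (\<lambda>y. 0)"
  using assms
proof (induction es arbitrary: g)
  case (Cons e es)
  have "shift_prod es (shift e g) = (\<lambda>y. 0)"
    using Cons.prems(2) by (simp add: shift_prod_shift)
  then obtain es' where es': "distinct es'" "\<forall>e\<in>set es'. cnj e = e"
    and zero: "shift e (shift_prod es' g) = (\<lambda>y. 0)"
    using Cons.IH[OF supported_shift[OF Cons.prems(1)]] by (auto simp: shift_prod_shift)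
  have supp: "supported (shift_prod es'' g)" for es''
    using Cons.prems(1) by (rule supported_shift_prod)
  show ?case
  proof (cases "cnj e = e \<and> e \<notin> set es'")
    case True
    with es' zero show ?thesis
      by (intro exI[of _ "e # es'"]) simp
  next
    case False
    have "shift_prod es' g = (\<lambda>y. 0)"
    proof (cases "cnj e = e")
      case True
      with False have "e \<in> set es'" by blast
      then have "shift_prod es' g = shift e (shift_prod (remove1 e es') g)"
        by (rule shift_prod_remove1)
      with zero show ?thesis
        using shift_shift_real_eq_0[OF True supp] by simp
    qed (use eigenvector_nonreal_eq_0 supp zero in blast)
    with es' show ?thesis by blast
  qed
next
  case Nil
  then show ?case by (intro exI[of _ "[]"]) simp
qed

text \<open>Partial fractions: for distinct \<open>e\<^sub>i\<close>, the kernel of \<open>\<Prod>(evolve - e\<^sub>i)\<close> is the direct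
  sum of the eigenspaces of the \<open>e\<^sub>i\<close>.\<close>

lemma shift_prod_eigen_decomposition:
  assumes "distinct es" "supported g" "shift_prod es g = (\<lambda>y. 0)"
  shows "\<exists>G. (\<forall>e\<in>set es. supported (G e) \<and> evolve (G e) = (\<lambda>y. e * G e y))
    \<and> g = (\<lambda>y. \<Sum>e\<in>set es. G e y)"
  using assms
proof (induction es arbitrary: g)
  case (Cons e es)
  have e_notin: "e \<notin> set es" and "distinct es"
    using Cons.prems(1) by auto
  have "shift_prod es (shift e g) = (\<lambda>y. 0)"
    using Cons.prems(3) by (simp add: shift_prod_shift)
  then obtain H where H: "\<forall>e'\<in>set es. supported (H e') \<and> evolve (H e') = (\<lambda>y. e' * H e' y)"
    and H_sum: "shift e g = (\<lambda>y. \<Sum>e'\<in>set es. H e' y)"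
    using Cons.IH[OF \<open>distinct es\<close> supported_shift[OF Cons.prems(2)]] by blast
  define R where "R = (\<lambda>y. \<Sum>e'\<in>set es. inverse (e' - e) * H e' y)"
  define G where "G e' = (if e' = e then (\<lambda>y. g y - R y) else (\<lambda>y. inverse (e' - e) * H e' y))"
    for e'
  have "evolve R = (\<lambda>y. \<Sum>e'\<in>set es. inverse (e' - e) * (e' * H e' y))"
    using H unfolding R_def by (simp add: evolve_sum evolve_cmult)
  moreover have "(\<Sum>e'\<in>set es. inverse (e' - e) * (e' * H e' y)) - e * R y = shift e g y" for y
  proof -
    have "(\<Sum>e'\<in>set es. inverse (e' - e) * (e' * H e' y)) - e * R y
        = (\<Sum>e'\<in>set es. inverse (e' - e) * (e' - e) * H e' y)"
      unfolding R_def by (simp add: sum_distrib_left sum_subtractf[symmetric] algebra_simps)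
    also have "\<dots> = (\<Sum>e'\<in>set es. H e' y)"
    proof (intro sum.cong refl)
      fix e' assume "e' \<in> set es"
      with e_notin have "e' - e \<noteq> 0" by auto
      then show "inverse (e' - e) * (e' - e) * H e' y = H e' y" by simp
    qed
    finally show ?thesis
      using H_sum by simp
  qed
  ultimately have "evolve (G e) = (\<lambda>y. e * G e y)"
    by (simp add: G_def evolve_diff shift_def algebra_simps fun_eq_iff)
  moreover have "supported (G e)"
    using H Cons.prems(2) unfolding G_def R_def supported_def by simp
  moreover have "supported (G e') \<and> evolve (G e') = (\<lambda>y. e' * G e' y)" if "e' \<in> set es" for e'
    using H that e_notin unfolding G_def supported_def by (auto simp: evolve_cmult)
  moreover have "g = (\<lambda>y. \<Sum>e'\<in>set (e # es). G e' y)"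
    using e_notin by (auto simp: G_def R_def fun_eq_iff intro!: sum.cong)
  ultimately show ?case
    by (intro exI[of _ G]) auto
qed simp

lemma evolve_pow_expansion_of_annihilator:
  assumes "supported g" "shift_prod es g = (\<lambda>y. 0)"
  obtains D :: "real set" and C where "finite D"
    "\<And>k y. (evolve ^^ k) g y = (\<Sum>r\<in>D. of_real r ^ k * C r y)"
proof -
  obtain es' where es': "distinct es'" "\<forall>e\<in>set es'. cnj e = e" "shift_prod es' g = (\<lambda>y. 0)"
    using shift_prod_distinct_real[OF assms] by blast
  obtain G where G: "\<forall>e\<in>set es'. evolve (G e) = (\<lambda>y. e * G e y)"
    and g: "g = (\<lambda>y. \<Sum>e\<in>set es'. G e y)"
    using shift_prod_eigen_decomposition[OF es'(1) assms(1) es'(3)] by blast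
  have real: "of_real (Re e) = e" if "e \<in> set es'" for e
    using es'(2) that by (simp add: Reals_cnj_iff[symmetric])
  then have "inj_on Re (set es')"
    by (metis inj_onI)
  have "(evolve ^^ k) g y = (\<Sum>r\<in>Re ` set es'. of_real r ^ k * G (of_real r) y)" for k y
  proof -
    have "(evolve ^^ k) g y = (\<Sum>e\<in>set es'. e ^ k * G e y)"
      using evolve_pow_eigen_sum[of "set es'" G k] G unfolding g[symmetric] by simp
    also have "\<dots> = (\<Sum>e\<in>set es'. of_real (Re e) ^ k * G (of_real (Re e)) y)"
      using real by (intro sum.cong) simp_all
    also have "\<dots> = (\<Sum>r\<in>Re ` set es'. of_real r ^ k * G (of_real r) y)"
      by (simp add: sum.reindex[OF \<open>inj_on Re (set es')\<close>])
    finally show ?thesis .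
  qed
  then show ?thesis
    by (intro that[of "Re ` set es'"]) simp_all
qed

fun poly_evolve_coeffs :: "complex list \<Rightarrow> ('a \<Rightarrow> complex) \<Rightarrow> 'a \<Rightarrow> complex" where
  "poly_evolve_coeffs [] f = (\<lambda>y. 0)"
| "poly_evolve_coeffs (a # as) f = (\<lambda>y. a * f y + evolve (poly_evolve_coeffs as f) y)"

definition poly_evolve :: "complex poly \<Rightarrow> ('a \<Rightarrow> complex) \<Rightarrow> 'a \<Rightarrow> complex" where
  "poly_evolve p = poly_evolve_coeffs (coeffs p)"

lemma poly_evolve_0: "poly_evolve 0 f = (\<lambda>y. 0)"
  by (simp add: poly_evolve_def)

lemma poly_evolve_pCons: "poly_evolve (pCons a p) f = (\<lambda>y. a * f y + evolve (poly_evolve p f) y)"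
proof (cases "p = 0 \<and> a = 0")
  case False
  then have "coeffs (pCons a p) = a # coeffs p"
    by (auto simp: cCons_def)
  then show ?thesis by (simp add: poly_evolve_def)
qed (simp add: poly_evolve_def evolve_zero)

lemma poly_evolve_add: "poly_evolve (p + q) f = (\<lambda>y. poly_evolve p f y + poly_evolve q f y)"
proof (induction p q rule: poly_induct2)
  case (pCons a p b q)
  show ?case
    unfolding add_pCons poly_evolve_pCons pCons evolve_add by (simp add: fun_eq_iff algebra_simps)
qed (simp add: poly_evolve_0)

lemma poly_evolve_smult: "poly_evolve (smult c p) f = (\<lambda>y. c * poly_evolve p f y)"
proof (induction p)
  case (pCons a p)
  show ?case
    unfolding smult_pCons poly_evolve_pCons pCons.IH evolve_cmult by (simp add: fun_eq_iff algebra_simps)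
qed (simp add: poly_evolve_0)

lemma poly_evolve_mult: "poly_evolve (p * q) f = poly_evolve p (poly_evolve q f)"
  by (induction p)
    (simp_all add: poly_evolve_0 poly_evolve_pCons poly_evolve_add poly_evolve_smult evolve_zero)

lemma poly_evolve_monom: "poly_evolve (monom c n) f = (\<lambda>y. c * (evolve ^^ n) f y)"
  by (induction n)
    (simp_all add: monom_0 monom_Suc poly_evolve_pCons poly_evolve_0 evolve_zero evolve_cmult)

lemma poly_evolve_sum: "poly_evolve (\<Sum>i\<in>I. p i) f = (\<lambda>y. \<Sum>i\<in>I. poly_evolve (p i) f y)"
  by (induction I rule: infinite_finite_induct) (simp_all add: poly_evolve_0 poly_evolve_add)

lemma poly_evolve_linear_factors:
  "poly_evolve (\<Prod>i<m. [:- r i, 1:]) f = shift_prod (rev (map r [0..<m])) f"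
proof (induction m arbitrary: f)
  case 0
  show ?case by (simp add: one_pCons poly_evolve_pCons poly_evolve_0 evolve_zero)
next
  case (Suc m)
  have "poly_evolve [:- r m, 1:] f = shift (r m) f"
    by (simp add: poly_evolve_pCons poly_evolve_0 evolve_zero shift_def fun_eq_iff)
  then have "poly_evolve ((\<Prod>i<m. [:- r i, 1:]) * [:- r m, 1:]) f
      = shift_prod (rev (map r [0..<m])) (shift (r m) f)"
    unfolding poly_evolve_mult Suc.IH by simp
  then show ?case
    by (simp add: shift_prod_shift)
qed

lemma shift_prod_of_poly_annihilator:
  assumes "p \<noteq> 0" "poly_evolve p g = (\<lambda>y. 0)"
  obtains es where "shift_prod es g = (\<lambda>y. 0)"
proof -
  obtain r where "smult (lead_coeff p) (\<Prod>i<degree p. [:- r i, 1:]) = p"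
    using complex_poly_decompose' by blast
  with assms(2) have "(\<lambda>y. lead_coeff p * shift_prod (rev (map r [0..<degree p])) g y) = (\<lambda>y. 0)"
    by (metis poly_evolve_smult poly_evolve_linear_factors)
  with assms(1) have "shift_prod (rev (map r [0..<degree p])) g = (\<lambda>y. 0)"
    by (simp add: fun_eq_iff)
  then show ?thesis by (rule that)
qed

text \<open>Krylov argument: \<open>g, evolve g, \<dots>, evolve\<^sup>n g\<close> are \<open>n + 1\<close> vectors in a space of
  dimension \<open>n = card V\<close>.\<close>

lemma poly_annihilator_exists:
  assumes "supported g"
  obtains p where "p \<noteq> 0" "poly_evolve p g = (\<lambda>y. 0)"
proof -
  define n where "n = card V"
  define K where "K i = (evolve ^^ i) g" for i
  show ?thesis
  proof (cases "inj_on K {..n}")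
    case False
    then obtain i j where ij: "i \<noteq> j" "K i = K j"
      unfolding inj_on_def by blast
    define p where "p = monom 1 j + smult (-1) (monom (1::complex) i)"
    have "coeff p j = 1"
      unfolding p_def using ij(1) by simp
    then have "p \<noteq> 0" by auto
    moreover have "poly_evolve p g = (\<lambda>y. 0)"
      using ij(2) unfolding p_def poly_evolve_add poly_evolve_smult poly_evolve_monom K_def by simp
    ultimately show ?thesis by (rule that)
  next
    case True
    define sc where "sc = (\<lambda>(c::complex) (f::'a \<Rightarrow> complex) y. c * f y)"
    interpret cvs: vector_space sc
      unfolding sc_def Vector_Spaces.vector_space_def by (simp add: fun_eq_iff algebra_simps)
    define delta where "delta v = (\<lambda>y. if y = v then 1 else 0 :: complex)" for v :: 'a
    have in_span: "f \<in> cvs.span (delta ` V)" if "supported f" for f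
    proof -
      have "f = (\<Sum>v\<in>V. sc (f v) (delta v))"
      proof
        fix y
        have "(\<Sum>v\<in>V. sc (f v) (delta v)) y = (\<Sum>v\<in>V. if v = y then f y else 0)"
          unfolding sum_fun_apply sc_def delta_def by (intro sum.cong refl) auto
        also have "\<dots> = f y"
          using that finite_V unfolding supported_def by (simp add: sum.delta)
        finally show "f y = (\<Sum>v\<in>V. sc (f v) (delta v)) y" by simp
      qed
      also have "\<dots> \<in> cvs.span (delta ` V)"
        by (intro cvs.span_sum cvs.span_scale cvs.span_base) simp
      finally show ?thesis .
    qed
    have "K ` {..n} \<subseteq> cvs.span (delta ` V)"
      unfolding K_def using in_span supported_evolve_pow[OF assms] by blast
    moreover have "card (delta ` V) < card (K ` {..n})"
      using card_image_le[OF finite_V, of delta] card_image[OF True] unfolding n_def by simp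
    ultimately have "cvs.dependent (K ` {..n})"
      using cvs.independent_span_bound[of "delta ` V" "K ` {..n}"] finite_V by (meson finite_imageI not_le)
    then obtain t u where t: "finite t" "t \<subseteq> K ` {..n}" "(\<Sum>v\<in>t. sc (u v) v) = 0"
      and "\<exists>v\<in>t. u v \<noteq> 0"
      unfolding cvs.dependent_explicit by blast
    then obtain i0 where i0: "i0 \<le> n" "K i0 \<in> t" "u (K i0) \<noteq> 0"
      by blast
    define c where "c i = (if K i \<in> t then u (K i) else 0)" for i
    define p where "p = (\<Sum>i\<le>n. monom (c i) i)"
    have "coeff p i0 = c i0"
      unfolding p_def coeff_sum using i0(1) by (simp add: sum.delta)
    also have "\<dots> \<noteq> 0"
      unfolding c_def using i0 by simp
    finally have "p \<noteq> 0" by auto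
    have "poly_evolve p g = (\<lambda>y. 0)"
    proof
      fix y
      have "poly_evolve p g y = (\<Sum>i\<le>n. if i \<in> {i. K i \<in> t} then u (K i) * K i y else 0)"
        unfolding p_def poly_evolve_sum poly_evolve_monom c_def K_def by (intro sum.cong refl) simp
      also have "\<dots> = (\<Sum>i\<in>{..n} \<inter> {i. K i \<in> t}. u (K i) * K i y)"
        by (rule sum.inter_restrict[symmetric]) simp
      also have "\<dots> = (\<Sum>i\<in>{i\<in>{..n}. K i \<in> t}. u (K i) * K i y)"
        by (rule sum.cong) auto
      also have "\<dots> = (\<Sum>v\<in>K ` {i\<in>{..n}. K i \<in> t}. u v * v y)"
        by (rule sum.reindex[symmetric, unfolded comp_def]) (rule inj_on_subset[OF True], blast)
      also have "K ` {i\<in>{..n}. K i \<in> t} = t"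
        using t(2) by blast
      also have "(\<Sum>v\<in>t. u v * v y) = (\<Sum>v\<in>t. sc (u v) v) y"
        unfolding sum_fun_apply sc_def ..
      finally show "poly_evolve p g y = 0"
        unfolding t(3) by simp
    qed
    with \<open>p \<noteq> 0\<close> show ?thesis by (rule that)
  qed
qed

lemma evolve_pow_expansion:
  assumes "supported g"
  obtains D :: "real set" and C where "finite D"
    "\<And>k y. (evolve ^^ k) g y = (\<Sum>r\<in>D. of_real r ^ k * C r y)"
proof -
  obtain p where "p \<noteq> 0" "poly_evolve p g = (\<lambda>y. 0)"
    using poly_annihilator_exists[OF assms] .
  then obtain es where "shift_prod es g = (\<lambda>y. 0)"
    by (rule shift_prod_of_poly_annihilator)
  with assms show ?thesis
    by (rule evolve_pow_expansion_of_annihilator) (rule that)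
qed

end

section \<open>The lazy random walk\<close>

lemma simple_connected_graph_edge:
  "simple_connected_graph V E \<Longrightarrow> E x y \<Longrightarrow> x \<in> V \<and> y \<in> V \<and> E y x"
  by (simp add: simple_connected_graph_def)

lemma simple_connected_graph_finite: "simple_connected_graph V E \<Longrightarrow> finite V"
  by (simp add: simple_connected_graph_def)

lemma simple_connected_graph_irrefl: "simple_connected_graph V E \<Longrightarrow> \<not> E x x"
  by (simp add: simple_connected_graph_def)

lemma simple_connected_graph_connected:
  "simple_connected_graph V E \<Longrightarrow> x \<in> V \<Longrightarrow> y \<in> V \<Longrightarrow> (x, y) \<in> (edges E)\<^sup>*"
  by (simp add: simple_connected_graph_def)

lemma deg_pos_if_edge:
  assumes "simple_connected_graph V E" "E x y"
  shows "0 < deg E x"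
proof -
  have "{y. E x y} \<subseteq> V"
    using simple_connected_graph_edge[OF assms(1)] by blast
  then have "finite {y. E x y}"
    using simple_connected_graph_finite[OF assms(1)] by (rule finite_subset)
  with assms(2) show ?thesis
    unfolding deg_def by (auto simp: card_gt_0_iff)
qed

lemma deg_pos_if_other_vertex:
  assumes "simple_connected_graph V E" "x \<in> V" "y \<in> V" "x \<noteq> y"
  shows "0 < deg E x"
proof -
  have "(x, y) \<in> (edges E)\<^sup>*"
    using assms(1-3) by (rule simple_connected_graph_connected)
  with assms(4) obtain z where "(x, z) \<in> edges E"
    by (metis converse_rtranclE)
  then have "E x z"
    by (simp add: edges_def)
  with assms(1) show ?thesis by (rule deg_pos_if_edge)
qed

text \<open>The lazy walk is reversible with respect to the degrees; an isolated vertex gets weight 1 so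
  that all weights are positive.\<close>

definition deg_weight :: "('a \<Rightarrow> 'a \<Rightarrow> bool) \<Rightarrow> 'a \<Rightarrow> real" where
  "deg_weight E x = (if deg E x = 0 then 1 else real (deg E x))"

lemma reversible_kernel_lazy_walk:
  assumes G: "simple_connected_graph V E"
  shows "reversible_kernel V (trans_prob E \<gamma>) (deg_weight E)"
proof
  show "finite V" using G by (rule simple_connected_graph_finite)
  show "0 < deg_weight E x" for x
    by (simp add: deg_weight_def)
  show "deg_weight E x * trans_prob E \<gamma> x y = deg_weight E y * trans_prob E \<gamma> y x" for x y
  proof (cases "E x y")
    case True
    then have "E y x"
      using simple_connected_graph_edge[OF G] by simp
    have "0 < deg E x" "0 < deg E y"
      using deg_pos_if_edge[OF G True] deg_pos_if_edge[OF G \<open>E y x\<close>] by simp_all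
    with True \<open>E y x\<close> show ?thesis
      by (simp add: deg_weight_def trans_prob_def)
  next
    case False
    then have "\<not> E y x"
      using simple_connected_graph_edge[OF G, of y x] by auto
    with False show ?thesis
      by (simp add: trans_prob_def)
  qed
qed

lemma walk_dist_eq_evolve_pow:
  assumes G: "simple_connected_graph V E"
  shows "(\<lambda>y. of_real (walk_dist V E \<gamma> w k y)) =
    (reversible_kernel.evolve V (trans_prob E \<gamma>) ^^ k) (\<lambda>y. of_real (walk_dist V E \<gamma> w 0 y))"
proof -
  interpret reversible_kernel V "trans_prob E \<gamma>" "deg_weight E"
    using G by (rule reversible_kernel_lazy_walk)
  have vanish: "walk_dist V E \<gamma> w (Suc k) y = 0" if "y \<notin> V" for k y
  proof -
    have "trans_prob E \<gamma> x y = 0" if "x \<in> V" for x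
      using \<open>y \<notin> V\<close> that simple_connected_graph_edge[OF G, of x y] by (auto simp: trans_prob_def)
    then show ?thesis
      by (simp only: walk_dist.simps) (simp add: sum.neutral)
  qed
  show ?thesis
  proof (induction k)
    case (Suc k)
    show ?case
    proof
      fix y
      have "(evolve ^^ Suc k) (\<lambda>y. of_real (walk_dist V E \<gamma> w 0 y))
          = evolve (\<lambda>y. of_real (walk_dist V E \<gamma> w k y))"
        using Suc.IH by simp
      then show "of_real (walk_dist V E \<gamma> w (Suc k) y)
          = (evolve ^^ Suc k) (\<lambda>y. of_real (walk_dist V E \<gamma> w 0 y)) y"
        using vanish[of y k] by (cases "y \<in> V") (simp_all add: evolve_def)
    qed
  qed simp
qed

lemma walk_dist_expansion:
  assumes G: "simple_connected_graph V E" and w: "w \<in> V"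
  obtains D :: "real set" and C where "finite D"
    "\<And>k y. walk_dist V E \<gamma> w k y = (\<Sum>r\<in>D. C r y * r ^ k)"
proof -
  interpret reversible_kernel V "trans_prob E \<gamma>" "deg_weight E"
    using G by (rule reversible_kernel_lazy_walk)
  have "supported (\<lambda>y. of_real (walk_dist V E \<gamma> w 0 y))"
    using w by (simp add: supported_def)
  then obtain D C where D: "finite D"
    and C: "\<And>k y. (evolve ^^ k) (\<lambda>y. of_real (walk_dist V E \<gamma> w 0 y)) y = (\<Sum>r\<in>D. of_real r ^ k * C r y)"
    by (rule evolve_pow_expansion) blast
  have "walk_dist V E \<gamma> w k y = (\<Sum>r\<in>D. Re (C r y) * r ^ k)" for k y
  proof -
    have "of_real (walk_dist V E \<gamma> w k y) = (\<Sum>r\<in>D. of_real r ^ k * C r y)"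
      using fun_cong[OF walk_dist_eq_evolve_pow[OF G, of \<gamma> w k], of y] C by simp
    then have "walk_dist V E \<gamma> w k y = Re (\<Sum>r\<in>D. of_real r ^ k * C r y)"
      by (metis Re_complex_of_real)
    also have "\<dots> = (\<Sum>r\<in>D. Re (C r y) * r ^ k)"
      by (simp add: Re_sum mult.commute flip: of_real_power)
    finally show ?thesis .
  qed
  with D show ?thesis by (rule that)
qed

lemma walk_dist_parity_expsum:
  assumes "simple_connected_graph V E" "w \<in> V"
  shows "eventually_expsum (\<lambda>k. walk_dist V E \<gamma> w (2 * k + j) y)"
proof -
  obtain D :: "real set" and C where "finite D" "\<And>k y. walk_dist V E \<gamma> w k y = (\<Sum>r\<in>D. C r y * r ^ k)"
    by (rule walk_dist_expansion[OF assms, of \<gamma>]) blast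
  then show ?thesis
    using eventually_expsum_power_parity[of "\<lambda>r. C r y"] by simp
qed

lemma W_seq_parity_expsum:
  assumes "guvab V E u v \<alpha> \<beta>"
  shows "eventually_expsum (\<lambda>k. W_seq V E u v \<alpha> \<beta> (2 * k + j))"
proof -
  have G: "simple_connected_graph V E" "u \<in> V" "v \<in> V"
    using assms unfolding guvab_def by auto
  show ?thesis
    unfolding W_seq_def wasserstein_def transport_cost_def[symmetric]
    by (intro eventually_expsum_optimal_transport simple_connected_graph_finite[OF G(1)]
        walk_dist_parity_expsum G)
qed

lemma walk_dist_distribution:
  assumes G: "simple_connected_graph V E" and w: "w \<in> V" and "0 \<le> \<gamma>" "\<gamma> \<le> 1"
    and deg_pos: "\<And>x. x \<in> V \<Longrightarrow> 0 < deg E x"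
  shows "(\<forall>y. 0 \<le> walk_dist V E \<gamma> w k y) \<and> (\<Sum>y\<in>V. walk_dist V E \<gamma> w k y) = 1"
proof (induction k)
  case 0
  show ?case
    using simple_connected_graph_finite[OF G] w by simp
next
  case (Suc k)
  have finV: "finite V"
    using G by (rule simple_connected_graph_finite)
  have nonneg: "0 \<le> trans_prob E \<gamma> x y" for x y
    using assms(3,4) by (simp add: trans_prob_def)
  have row_sum: "(\<Sum>y\<in>V. trans_prob E \<gamma> x y) = 1" if "x \<in> V" for x
  proof -
    have "V \<inter> {y. E x y} = {y. E x y}"
      using simple_connected_graph_edge[OF G] by blast
    then have "(\<Sum>y\<in>V. if E x y then (1 - \<gamma>) / real (deg E x) else 0) = 1 - \<gamma>"
      using deg_pos[OF that] finV by (simp add: sum.If_cases deg_def)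
    then show ?thesis
      using finV that by (simp add: trans_prob_def sum.distrib)
  qed
  have "(\<Sum>y\<in>V. walk_dist V E \<gamma> w (Suc k) y)
      = (\<Sum>y\<in>V. \<Sum>x\<in>V. walk_dist V E \<gamma> w k x * trans_prob E \<gamma> x y)"
    by simp
  also have "\<dots> = (\<Sum>x\<in>V. walk_dist V E \<gamma> w k x * (\<Sum>y\<in>V. trans_prob E \<gamma> x y))"
    by (subst sum.swap) (simp add: sum_distrib_left)
  also have "\<dots> = 1"
    using Suc row_sum by simp
  finally show ?case
    using Suc nonneg by (auto intro!: sum_nonneg mult_nonneg_nonneg)
qed

lemma wasserstein_bounded:
  assumes finV: "finite V"
    and \<mu>: "\<forall>x. 0 \<le> \<mu> x" "(\<Sum>x\<in>V. \<mu> x) = 1" and \<nu>: "\<forall>y. 0 \<le> \<nu> y" "(\<Sum>y\<in>V. \<nu> y) = 1"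
  shows "\<bar>wasserstein V E \<mu> \<nu>\<bar> \<le> (\<Sum>x\<in>V. \<Sum>y\<in>V. real (gdist E x y))"
proof -
  define B where "B = (\<Sum>x\<in>V. \<Sum>y\<in>V. real (gdist E x y))"
  define A where "A = {(\<Sum>x\<in>V. \<Sum>y\<in>V. real (gdist E x y) * T x y) | T. coupling V \<mu> \<nu> T}"
  have product: "coupling V \<mu> \<nu> (\<lambda>x y. \<mu> x * \<nu> y)"
    using \<mu> \<nu> by (simp add: coupling_def flip: sum_distrib_left sum_distrib_right)
  define a0 where "a0 = (\<Sum>x\<in>V. \<Sum>y\<in>V. real (gdist E x y) * (\<mu> x * \<nu> y))"
  have a0: "a0 \<in> A"
    unfolding A_def a0_def mem_Collect_eq by (rule exI[of _ "\<lambda>x y. \<mu> x * \<nu> y"]) (simp add: product)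
  have nonneg: "0 \<le> a" if "a \<in> A" for a
    using that unfolding A_def coupling_def by (auto intro!: sum_nonneg)
  have "real (gdist E x y) \<le> B" if "x \<in> V" "y \<in> V" for x y
    unfolding B_def using finV that
    by (intro order.trans[OF member_le_sum[of y V] member_le_sum[of x V]] sum_nonneg) auto
  then have "a0 \<le> (\<Sum>x\<in>V. \<Sum>y\<in>V. B * (\<mu> x * \<nu> y))"
    unfolding a0_def using \<mu> \<nu> by (intro sum_mono mult_right_mono) auto
  also have "\<dots> = B"
    using \<mu> \<nu> by (simp flip: sum_distrib_left sum_distrib_right)
  finally have "a0 \<le> B" .
  moreover have "0 \<le> Inf A"
    using a0 nonneg by (intro cInf_greatest) auto
  moreover have "Inf A \<le> a0"
    using a0 nonneg by (intro cInf_lower bdd_belowI) auto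
  ultimately show ?thesis
    unfolding wasserstein_def A_def[symmetric] B_def[symmetric] by simp
qed

lemma W_seq_bounded:
  assumes "guvab V E u v \<alpha> \<beta>" "V \<noteq> {u}"
  shows "\<bar>W_seq V E u v \<alpha> \<beta> k\<bar> \<le> (\<Sum>x\<in>V. \<Sum>y\<in>V. real (gdist E x y))"
proof -
  have G: "simple_connected_graph V E" and uv: "u \<in> V" "v \<in> V" and "0 \<le> \<alpha>" "\<alpha> \<le> \<beta>" "\<beta> \<le> 1"
    using assms(1) unfolding guvab_def by auto
  obtain x0 where "x0 \<in> V" "x0 \<noteq> u"
    using assms(2) uv(1) by blast
  then have "0 < deg E x" if "x \<in> V" for x
    using deg_pos_if_other_vertex[OF G that] uv(1) by (cases "x = u") auto
  then show ?thesis
    unfolding W_seq_def using walk_dist_distribution[OF G] uv \<open>0 \<le> \<alpha>\<close> \<open>\<alpha> \<le> \<beta>\<close> \<open>\<beta> \<le> 1\<close>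
    by (intro wasserstein_bounded simple_connected_graph_finite[OF G]) auto
qed

text \<open>On a single vertex both walks stay at \<open>u\<close> with total masses \<open>\<alpha>\<^sup>k\<close> and \<open>\<beta>\<^sup>k\<close>
  (the vertex has degree 0), so a coupling exists iff \<open>\<alpha>\<^sup>k = \<beta>\<^sup>k\<close>, and then the cost is 0.\<close>

lemma W_seq_single_vertex:
  assumes "guvab V E u v \<alpha> \<beta>" "V = {u}" "1 \<le> k"
  shows "W_seq V E u v \<alpha> \<beta> k = W_seq V E u v \<alpha> \<beta> 1"
proof -
  have G: "simple_connected_graph V E" and "v = u" "0 \<le> \<alpha>" "\<alpha> \<le> \<beta>" "\<beta> \<le> 1"
    using assms(1,2) unfolding guvab_def by auto
  have "walk_dist V E \<gamma> u k u = \<gamma> ^ k" for \<gamma> k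
    using simple_connected_graph_irrefl[OF G] assms(2) by (induction k) (simp_all add: trans_prob_def)
  moreover have "gdist E u u = 0"
    unfolding gdist_def by (rule Least_eq_0) simp
  ultimately have costs: "{(\<Sum>x\<in>V. \<Sum>y\<in>V. real (gdist E x y) * T x y) | T.
      coupling V (walk_dist V E \<alpha> u k) (walk_dist V E \<beta> v k) T} = {a. a = 0 \<and> \<alpha> ^ k = \<beta> ^ k}"
    for k
    using assms(2) \<open>v = u\<close> \<open>0 \<le> \<alpha>\<close> \<open>\<alpha> \<le> \<beta>\<close> unfolding coupling_def
    by (auto intro!: exI[of _ "\<lambda>x y. \<alpha> ^ k"])
  have "\<alpha> ^ k = \<beta> ^ k \<longleftrightarrow> \<alpha> = \<beta>" if "1 \<le> k" for k
    using that \<open>0 \<le> \<alpha>\<close> \<open>\<alpha> \<le> \<beta>\<close> by (intro power_eq_iff_eq_base) auto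
  then have "W_seq V E u v \<alpha> \<beta> k = Inf {a. a = 0 \<and> \<alpha> = \<beta>}" if "1 \<le> k" for k
    using that unfolding W_seq_def wasserstein_def costs by simp
  with assms(3) show ?thesis
    by simp
qed

theorem theorem8p1:
  fixes V :: "'a set" and E :: "'a \<Rightarrow> 'a \<Rightarrow> bool" and u v :: 'a and \<alpha> \<beta> :: real
  assumes "guvab V E u v \<alpha> \<beta>"
  defines "W \<equiv> W_seq V E u v \<alpha> \<beta>"
  shows "convergent (\<lambda>k. W (2 * k)) \<and> convergent (\<lambda>k. W (2 * k + 1)) \<and>
    (eventually_constant (\<lambda>k. W (2 * k)) \<or>
      (\<exists>lam c::real. -1 < lam \<and> lam < 1 \<and> 0 < c \<and>
        (\<lambda>k. \<bar>W (2 * k) - lim (\<lambda>k. W (2 * k))\<bar>) \<sim>[sequentially] (\<lambda>k. c * \<bar>lam\<bar> ^ (2 * k)))) \<and>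
    (eventually_constant (\<lambda>k. W (2 * k + 1)) \<or>
      (\<exists>lam c::real. -1 < lam \<and> lam < 1 \<and> 0 < c \<and>
        (\<lambda>k. \<bar>W (2 * k + 1) - lim (\<lambda>k. W (2 * k + 1))\<bar>) \<sim>[sequentially] (\<lambda>k. c * \<bar>lam\<bar> ^ (2 * k + 1))))"
proof -
  have "convergent (\<lambda>k. W (2 * k + j)) \<and> (eventually_constant (\<lambda>k. W (2 * k + j)) \<or>
      (\<exists>lam c::real. -1 < lam \<and> lam < 1 \<and> 0 < c \<and>
        (\<lambda>k. \<bar>W (2 * k + j) - lim (\<lambda>k. W (2 * k + j))\<bar>) \<sim>[sequentially] (\<lambda>k. c * \<bar>lam\<bar> ^ (2 * k + j))))"
    for j
  proof (cases "V = {u}")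
    case True
    have const: "W (2 * k + j) = W 1" if "1 \<le> k" for k
      unfolding W_def using that by (intro W_seq_single_vertex[OF assms(1) True]) simp
    have "eventually_constant (\<lambda>k. W (2 * k + j))"
      unfolding eventually_constant_def using const const[of 1] by (intro exI[of _ 1]) simp
    then show ?thesis
      by (simp add: eventually_constant_convergent)
  next
    case False
    show ?thesis
      unfolding W_def
      by (rule bounded_expsum_asymp_power[OF W_seq_parity_expsum W_seq_bounded]) fact+
  qed
  from this[of 0] this[of 1] show ?thesis
    by simp
qed

end
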